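(* For all $n\geq 0$: $d_7(4n+2)\equiv 0\pmod 4$, $d_7(8n+5)\equiv 0\pmod 4$, $d_7(16n+9)\equiv 0\pmod 4$, $d_7(4n+3)\equiv 0\pmod 8$, and $d_7(8n+4)\equiv 0\pmod 8$.
   Context: For each integer $k\geq 1$, the numbers $d_k(n)$ are defined by $\sum_{n\geq 0} d_k(n)q^n = \frac{f_2^k}{f_1^{3k+1}}$, where $f_r = \prod_{i\geq 1}(1-q^{ri})$. *)

theory Defs
  imports "HOL-Computational_Algebra.Formal_Power_Series"
begin

text \<open>Truncated Euler product  f_r^{(N)} = prod_{i=1..N} (1 - q^{r i})  as a formal power series
  over the integers. For any N \<ge> n, the coefficient of q^n of an expression in the f_r
  (r \<ge> 1) agrees with that computed from the infinite products.\<close>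
definition euler_trunc :: "nat \<Rightarrow> nat \<Rightarrow> int fps" where
  "euler_trunc N r = (\<Prod>i\<in>{1..N}. 1 - fps_X ^ (r * i))"

text \<open>d_k(n) = [q^n] f_2^k / f_1^(3k+1).\<close>
definition d :: "nat \<Rightarrow> nat \<Rightarrow> int" where
  "d k n = fps_nth (euler_trunc n 2 ^ k * fps_right_inverse (euler_trunc n 1) 1 ^ (3 * k + 1)) n"

end

(*
  Write f_r for the Euler product prod (1 - q^(r i)), phi(q) for the sum of q^(j^2) over all
  integers j and psi(q) = f_2^2 / f_1. Squaring is additive modulo 2, so f_r^2 == f_(2r) (mod 2)
  and, by repeated squaring, f_r^(2^(k+1)) == f_(2r)^(2^k) (mod 2^(k+1)). Together with Gauss's
  identity f_1^2 = f_2 phi(-q) this reduces f_2^7 / f_1^22 modulo 8 to phi(-q) / f_2^4.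
  Sorting the squares modulo 4 gives the dissection phi(-q) = phi(q^4) - 2 q psi(q^8), so the
  coefficients of phi(-q) / f_2^4 at even and at odd exponents come from phi(q^4) / f_2^4 and
  from 2 psi(q^8) / f_2^4. Replacing 1/f_2^4 by 1/f_4^2 (mod 4) or by 1/f_8 (mod 2) turns these
  into series in q^4, q^8 or q^16, whose coefficients at the exponents in question vanish.
  For 8n+4 one further round is needed, using the dissection of phi(-q)^2 and
  1/phi(-q) == phi(-q)^3 (mod 8).
  Gauss's identity and psi(q^2) = (1/2) sum of q^(j^2+j) are the limits of the finite Jacobi
  triple product, whose Gaussian binomial weights tend to 1/f_2; power series identities are
  proved order by order through truncation.
*)
theory Submission
  imports Defs "HOL-Computational_Algebra.Formal_Laurent_Series"
begin

definition fps_agree :: "nat \<Rightarrow> 'a fps \<Rightarrow> 'a fps \<Rightarrow> bool" where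
  "fps_agree N a b \<longleftrightarrow> (\<forall>i\<le>N. a $ i = b $ i)"

lemma fps_agree_refl [simp]: "fps_agree N a a"
  by (simp add: fps_agree_def)

lemma fps_agree_sym: "fps_agree N a b \<Longrightarrow> fps_agree N b a"
  by (simp add: fps_agree_def)

lemma fps_agree_trans: "fps_agree N a b \<Longrightarrow> fps_agree N b c \<Longrightarrow> fps_agree N a c"
  by (simp add: fps_agree_def)

lemma fps_agree_mono: "fps_agree N a b \<Longrightarrow> M \<le> N \<Longrightarrow> fps_agree M a b"
  by (simp add: fps_agree_def)

lemma fps_agree_mult:
  fixes a b c e :: "'a::semiring_0 fps"
  shows "fps_agree N a b \<Longrightarrow> fps_agree N c e \<Longrightarrow> fps_agree N (a * c) (b * e)"
  by (auto simp: fps_agree_def fps_mult_nth intro!: sum.cong)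

lemma fps_agree_power:
  fixes a b :: "'a::semiring_1 fps"
  shows "fps_agree N a b \<Longrightarrow> fps_agree N (a ^ k) (b ^ k)"
  by (induction k) (auto intro: fps_agree_mult)

lemma fps_agree_sum:
  fixes f g :: "'b \<Rightarrow> 'a::comm_monoid_add fps"
  shows "(\<And>x. x \<in> S \<Longrightarrow> fps_agree N (f x) (g x)) \<Longrightarrow> fps_agree N (sum f S) (sum g S)"
  by (auto simp: fps_agree_def fps_sum_nth intro!: sum.cong)

lemma fps_eq_if_agree: "(\<And>N. fps_agree N a b) \<Longrightarrow> a = b"
  by (auto simp: fps_agree_def fps_eq_iff)

lemma fps_agree_right_inverse:
  fixes a b :: "'a::comm_ring_1 fps"
  assumes "a * a' = 1" "b * b' = 1" "fps_agree N a b"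
  shows "fps_agree N a' b'"
proof -
  have "a' * b' * (b - a) = a' * (b * b') - b' * (a * a')"
    by (simp add: algebra_simps)
  then have "a' - b' = a' * b' * (b - a)"
    using assms(1,2) by simp
  moreover have "fps_agree N (a' * b' * (b - a)) (a' * b' * 0)"
    using assms(3) by (intro fps_agree_mult) (auto simp: fps_agree_def)
  ultimately have "\<forall>i\<le>N. (a' - b') $ i = 0"
    by (simp only: fps_agree_def) simp
  then show ?thesis
    by (simp add: fps_agree_def)
qed

lemma fps_agree_compose_X_power:
  fixes a b :: "'a::comm_ring_1 fps"
  assumes "k > 0" "fps_agree N a b"
  shows "fps_agree (k * N + (k - 1)) (a oo fps_X ^ k) (b oo fps_X ^ k)"
  unfolding fps_agree_def fps_nth_compose_X_power
proof (intro allI impI)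
  fix i assume "i \<le> k * N + (k - 1)"
  then have "i < Suc N * k"
    using assms(1) by (simp add: algebra_simps)
  then have "i div k \<le> N"
    using assms(1) by (simp add: div_less_iff_less_mult less_Suc_eq_le[symmetric])
  then show "(if k dvd i then a $ (i div k) else 0) = (if k dvd i then b $ (i div k) else 0)"
    using assms(2) by (simp add: fps_agree_def)
qed

lemma fps_agree_mult_high_order:
  fixes a b c :: "'a::comm_ring_1 fps"
  assumes "fps_agree N a b" "\<And>i. i < s \<Longrightarrow> c $ i = 0"
  shows "fps_agree (N + s) (a * c) (b * c)"
  unfolding fps_agree_def
proof (intro allI impI)
  fix i assume i: "i \<le> N + s"
  have "(a * c) $ i - (b * c) $ i = (\<Sum>l=0..i. (a $ l - b $ l) * c $ (i - l))"
    by (simp add: fps_mult_nth sum_subtractf left_diff_distrib)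
  also have "\<dots> = 0"
  proof (intro sum.neutral ballI)
    fix l assume "l \<in> {0..i}"
    then have "l \<le> N \<or> i - l < s"
      using i by auto
    then show "(a $ l - b $ l) * c $ (i - l) = 0"
      using assms by (auto simp: fps_agree_def)
  qed
  finally show "(a * c) $ i = (b * c) $ i"
    by simp
qed

definition unit_inv :: "'a::comm_ring_1 fps \<Rightarrow> 'a fps" where
  "unit_inv a = fps_right_inverse a 1"

lemma unit_inv_nth_0 [simp]: "unit_inv a $ 0 = 1"
  by (simp add: unit_inv_def)

lemma unit_inv_right: "a $ 0 = 1 \<Longrightarrow> a * unit_inv a = 1"
  unfolding unit_inv_def by (rule fps_right_inverse) simp

lemma unit_inv_left: "a $ 0 = 1 \<Longrightarrow> unit_inv a * a = 1"
  using unit_inv_right by (simp add: mult.commute)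

lemma unit_inv_unique: "a $ 0 = 1 \<Longrightarrow> a * b = 1 \<Longrightarrow> unit_inv a = b"
  by (metis unit_inv_left mult.assoc mult_1_left mult_1_right)

lemma unit_inv_mult:
  assumes "a $ 0 = 1" "b $ 0 = 1"
  shows "unit_inv (a * b) = unit_inv a * unit_inv b"
proof (rule unit_inv_unique)
  have "a * b * (unit_inv a * unit_inv b) = (a * unit_inv a) * (b * unit_inv b)"
    by (simp only: mult_ac)
  then show "a * b * (unit_inv a * unit_inv b) = 1"
    using assms by (simp add: unit_inv_right)
qed (use assms in simp)

lemma unit_inv_power: "a $ 0 = 1 \<Longrightarrow> unit_inv (a ^ k) = unit_inv a ^ k"
  by (rule unit_inv_unique) (simp_all add: power_mult_distrib[symmetric] unit_inv_right fps_nth_power_0)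

lemma unit_inv_power_mult_power: "a $ 0 = 1 \<Longrightarrow> unit_inv a ^ k * a ^ k = 1"
  by (simp add: power_mult_distrib[symmetric] unit_inv_left)

lemma unit_inv_compose:
  fixes a c :: "'a::idom fps"
  assumes "a $ 0 = 1" "c $ 0 = 0"
  shows "unit_inv a oo c = unit_inv (a oo c)"
  by (rule unit_inv_unique[symmetric])
    (use assms in \<open>simp_all add: fps_compose_mult_distrib[symmetric] unit_inv_right\<close>)

lemma fps_compose_X_power_X_power:
  fixes a :: "'a::idom fps"
  assumes "k > 0" "l > 0"
  shows "a oo fps_X ^ k oo fps_X ^ l = a oo fps_X ^ (k * l)"
  using assms by (simp add: fps_compose_assoc[symmetric] fps_X_power_compose power_mult[symmetric]
      mult.commute)

lemma fps_compose_X_power_nth_mult [simp]: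
  "k > 0 \<Longrightarrow> (a oo fps_X ^ k) $ (k * m) = a $ m"
  by (simp add: fps_nth_compose_X_power)

lemma fps_compose_uminus_X_twice [simp]:
  fixes a :: "'a::comm_ring_1 fps"
  shows "a oo - fps_X oo - fps_X = a"
  by (simp add: fps_eq_iff fps_compose_uminus' power_mult_distrib[symmetric])

text \<open>The infinite product f_r, taken as the diagonal of its truncations: the coefficient of q^i
  of euler_trunc j r no longer depends on j once j \<ge> i.\<close>

definition euler_fps :: "nat \<Rightarrow> int fps" where
  "euler_fps r = Abs_fps (\<lambda>i. euler_trunc i r $ i)"

lemma euler_trunc_Suc: "euler_trunc (Suc n) r = euler_trunc n r * (1 - fps_X ^ (r * Suc n))"
  unfolding euler_trunc_def by (simp add: prod.nat_ivl_Suc')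

lemma euler_trunc_nth_0: "r > 0 \<Longrightarrow> euler_trunc n r $ 0 = 1"
  by (induction n) (simp_all add: euler_trunc_Suc, simp add: euler_trunc_def)

lemma euler_trunc_agree_mono:
  assumes "r > 0" "m \<le> j" "j \<le> j'"
  shows "fps_agree (r * Suc m - 1) (euler_trunc j r) (euler_trunc j' r)"
  using assms(3)
proof (induction j' rule: dec_induct)
  case (step l)
  have "fps_agree (r * Suc m - 1) (euler_trunc l r) (euler_trunc (Suc l) r)"
    unfolding fps_agree_def euler_trunc_Suc right_diff_distrib mult_1_right
  proof (intro allI impI)
    fix i assume "i \<le> r * Suc m - 1"
    moreover have "0 < r * Suc m" "r * Suc m \<le> r * Suc l"
      using assms(1,2) step(1) by simp_all
    ultimately have "i < r * Suc l"
      by linarith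
    then show "euler_trunc l r $ i = (euler_trunc l r - euler_trunc l r * fps_X ^ (r * Suc l)) $ i"
      by (simp add: fps_X_power_mult_right_nth)
  qed
  then show ?case
    using step(3) fps_agree_trans by blast
qed simp

lemma euler_trunc_agree_euler_fps:
  assumes "r > 0" "m \<le> j"
  shows "fps_agree (r * Suc m - 1) (euler_trunc j r) (euler_fps r)"
  unfolding fps_agree_def
proof (intro allI impI)
  fix i assume i: "i \<le> r * Suc m - 1"
  define m' where "m' = min m i"
  have "i \<le> r * Suc m' - 1"
  proof (cases "m \<le> i")
    case False
    have "1 * Suc i \<le> r * Suc i"
      using assms(1) by (intro mult_le_mono1) simp
    then show ?thesis
      using False by (simp add: m'_def)
  qed (use i in \<open>simp add: m'_def\<close>)
  moreover have "fps_agree (r * Suc m' - 1) (euler_trunc j r) (euler_trunc i r)"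
  proof (cases "j \<le> i")
    case True
    then show ?thesis
      using euler_trunc_agree_mono[OF assms(1), of m' j i] assms(2) by (simp add: m'_def)
  next
    case False
    then have "fps_agree (r * Suc m' - 1) (euler_trunc i r) (euler_trunc j r)"
      by (intro euler_trunc_agree_mono[OF assms(1)]) (simp_all add: m'_def)
    then show ?thesis
      by (rule fps_agree_sym)
  qed
  ultimately have "euler_trunc j r $ i = euler_trunc i r $ i"
    unfolding fps_agree_def by blast
  then show "euler_trunc j r $ i = euler_fps r $ i"
    by (simp add: euler_fps_def)
qed

lemma euler_fps_agree:
  assumes "r > 0" "N \<le> j"
  shows "fps_agree N (euler_trunc j r) (euler_fps r)"
proof (rule fps_agree_mono[OF euler_trunc_agree_euler_fps[OF assms]])
  show "N \<le> r * Suc N - 1"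
    using assms(1) by (cases r) auto
qed

lemma euler_fps_nth_0 [simp]: "euler_fps r $ 0 = 1"
  by (simp add: euler_fps_def euler_trunc_def)

lemma euler_trunc_compose: "k > 0 \<Longrightarrow> euler_trunc n r oo fps_X ^ k = euler_trunc n (k * r)"
  by (simp add: euler_trunc_def fps_compose_prod_distrib fps_compose_sub_distrib
      fps_X_power_compose power_mult[symmetric] mult.assoc)

lemma euler_fps_compose:
  assumes "k > 0" "r > 0"
  shows "euler_fps r oo fps_X ^ k = euler_fps (k * r)"
proof (rule fps_eq_if_agree)
  fix N
  have "fps_agree (k * N + (k - 1)) (euler_trunc N (k * r)) (euler_fps r oo fps_X ^ k)"
    using fps_agree_compose_X_power[OF assms(1) euler_fps_agree[OF assms(2) order.refl]]
    by (simp add: euler_trunc_compose assms(1))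
  then have "fps_agree N (euler_trunc N (k * r)) (euler_fps r oo fps_X ^ k)"
    by (rule fps_agree_mono) (use assms(1) in \<open>cases k; simp\<close>)
  moreover have "fps_agree N (euler_trunc N (k * r)) (euler_fps (k * r))"
    using assms by (intro euler_fps_agree) simp_all
  ultimately show "fps_agree N (euler_fps r oo fps_X ^ k) (euler_fps (k * r))"
    using fps_agree_sym fps_agree_trans by blast
qed

lemma d_eq_coeff: "d k n = (euler_fps 2 ^ k * unit_inv (euler_fps 1) ^ (3 * k + 1)) $ n"
proof -
  have "fps_agree n (unit_inv (euler_trunc n 1)) (unit_inv (euler_fps 1))"
    by (rule fps_agree_right_inverse[OF unit_inv_right unit_inv_right]) (simp_all add: euler_fps_agree euler_trunc_nth_0)
  then have "fps_agree n (euler_trunc n 2 ^ k * unit_inv (euler_trunc n 1) ^ (3 * k + 1))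
      (euler_fps 2 ^ k * unit_inv (euler_fps 1) ^ (3 * k + 1))"
    by (intro fps_agree_mult fps_agree_power euler_fps_agree) simp_all
  then show ?thesis
    by (simp add: d_def unit_inv_def fps_agree_def)
qed

definition fps_cong :: "int \<Rightarrow> int fps \<Rightarrow> int fps \<Rightarrow> bool" where
  "fps_cong m a b \<longleftrightarrow> fps_const m dvd a - b"

lemma fps_const_dvd_iff:
  fixes a :: "int fps"
  shows "fps_const m dvd a \<longleftrightarrow> (\<forall>i. m dvd a $ i)"
proof
  assume dvd: "\<forall>i. m dvd a $ i"
  have "a = fps_const m * Abs_fps (\<lambda>i. a $ i div m)"
  proof (rule fps_ext)
    fix i
    show "a $ i = (fps_const m * Abs_fps (\<lambda>i. a $ i div m)) $ i"
      using dvd_mult_div_cancel[of m "a $ i"] dvd by simp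
  qed
  then show "fps_const m dvd a"
    by (metis dvd_triv_left)
qed auto

lemma fps_cong_refl [simp]: "fps_cong m a a"
  by (simp add: fps_cong_def)

lemma fps_cong_sym: "fps_cong m a b \<Longrightarrow> fps_cong m b a"
  unfolding fps_cong_def by (metis dvd_minus_iff minus_diff_eq)

lemma fps_cong_trans: "fps_cong m a b \<Longrightarrow> fps_cong m b c \<Longrightarrow> fps_cong m a c"
  unfolding fps_cong_def using dvd_add[of _ "a - b" "b - c"] by simp

lemma fps_cong_add: "fps_cong m a b \<Longrightarrow> fps_cong m c e \<Longrightarrow> fps_cong m (a + c) (b + e)"
  unfolding fps_cong_def using dvd_add[of _ "a - b" "c - e"] by (simp add: algebra_simps)

lemma fps_cong_mult:
  assumes "fps_cong m a b" "fps_cong m c e"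
  shows "fps_cong m (a * c) (b * e)"
proof -
  have "a * c - b * e = (a - b) * c + b * (c - e)"
    by (simp add: algebra_simps)
  then show ?thesis
    using assms unfolding fps_cong_def by (simp add: dvd_add)
qed

lemma fps_cong_power: "fps_cong m a b \<Longrightarrow> fps_cong m (a ^ k) (b ^ k)"
  by (induction k) (auto intro: fps_cong_mult)

lemma fps_cong_mult_left: "fps_cong m a b \<Longrightarrow> fps_cong m (c * a) (c * b)"
  by (rule fps_cong_mult) auto

lemma fps_cong_unit_inv:
  assumes "a $ 0 = 1" "b $ 0 = 1" "fps_cong m a b"
  shows "fps_cong m (unit_inv a) (unit_inv b)"
proof -
  have "unit_inv a * unit_inv b * (b - a) = unit_inv a * (b * unit_inv b) - unit_inv b * (a * unit_inv a)"
    by (simp add: algebra_simps)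
  then have "unit_inv a - unit_inv b = unit_inv a * unit_inv b * (b - a)"
    using assms(1,2) by (simp add: unit_inv_right)
  then show ?thesis
    using fps_cong_sym[OF assms(3)] unfolding fps_cong_def by simp
qed

lemma fps_cong_compose:
  assumes "fps_cong m a b" "c $ 0 = 0"
  shows "fps_cong m (a oo c) (b oo c)"
proof -
  obtain e where "a - b = fps_const m * e"
    using assms(1) by (auto simp: fps_cong_def)
  then have "(a oo c) - (b oo c) = fps_const m * (e oo c)"
    by (simp add: fps_compose_sub_distrib[symmetric] fps_const_mult_apply_left)
  then show ?thesis
    by (simp add: fps_cong_def)
qed

lemma fps_cong_dvd_modulus:
  assumes "fps_cong m a b" "k dvd m"
  shows "fps_cong k a b"
proof -
  obtain l where "m = k * l"
    using assms(2) by blast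
  then have "fps_const k dvd fps_const m"
    by (simp flip: fps_const_mult)
  then show ?thesis
    using assms(1) dvd_trans unfolding fps_cong_def by blast
qed

lemma fps_cong_nth:
  assumes "fps_cong m a b"
  shows "m dvd a $ i - b $ i"
proof -
  obtain e where "a - b = fps_const m * e"
    using assms by (auto simp: fps_cong_def)
  then have "a $ i - b $ i = m * e $ i"
    by (metis fps_sub_nth fps_mult_left_const_nth)
  then show ?thesis
    by simp
qed

lemma fps_cong_square:
  assumes "fps_cong m a b" "even m"
  shows "fps_cong (2 * m) (a ^ 2) (b ^ 2)"
proof -
  obtain e where e: "a - b = fps_const m * e"
    using assms(1) by (auto simp: fps_cong_def)
  obtain l where l: "m = 2 * l"
    using assms(2) by blast
  have "fps_const m * fps_const m = fps_const (2 * m) * fps_const l"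
    by (simp add: l mult.assoc)
  then have square: "(a - b) ^ 2 = fps_const (2 * m) * (fps_const l * e ^ 2)"
    unfolding e by (simp add: power_mult_distrib power2_eq_square mult.assoc)
  have linear: "2 * b * (a - b) = fps_const (2 * m) * (b * e)"
    unfolding e by (simp add: numeral_fps_const flip: fps_const_mult)
  have "a ^ 2 - b ^ 2 = (a - b) ^ 2 + 2 * b * (a - b)"
    by algebra
  also have "\<dots> = fps_const (2 * m) * (fps_const l * e ^ 2 + b * e)"
    unfolding square linear by (simp only: distrib_left)
  finally show ?thesis
    by (simp add: fps_cong_def)
qed

lemma fps_cong_if_agree:
  assumes "\<And>N. \<exists>a' b'. fps_agree N a a' \<and> fps_agree N b b' \<and> fps_cong m a' b'"
  shows "fps_cong m a b"
  unfolding fps_cong_def fps_const_dvd_iff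
proof
  fix i
  obtain a' b' where "fps_agree i a a'" "fps_agree i b b'" "fps_cong m a' b'"
    using assms by blast
  then show "m dvd (a - b) $ i"
    by (auto simp: fps_agree_def fps_cong_def fps_const_dvd_iff)
qed

lemma fps_cong_unit_inv_power:
  assumes "a $ 0 = 1" "b $ 0 = 1" "fps_cong m (a ^ k) (b ^ l)"
  shows "fps_cong m (unit_inv a ^ k) (unit_inv b ^ l)"
  using fps_cong_unit_inv[of "a ^ k" "b ^ l" m] assms by (simp add: unit_inv_power fps_nth_power_0)

lemma fps_cutoff_Suc: "fps_cutoff (Suc n) a = fps_cutoff n a + fps_const (a $ n) * fps_X ^ n"
  by (auto simp: fps_eq_iff less_Suc_eq)

lemma fps_cong_2_square_cutoff: "fps_cong 2 (fps_cutoff n a ^ 2) (fps_cutoff n a oo fps_X ^ 2)"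
proof (induction n)
  case (Suc n)
  define p c where "p = fps_cutoff n a" and "c = a $ n"
  have "c ^ 2 - c = 2 * ((c ^ 2 - c) div 2)"
    by simp
  then have "fps_const (c ^ 2) - fps_const c = fps_const 2 * fps_const ((c ^ 2 - c) div 2)"
    by (metis fps_const_sub fps_const_mult)
  then have "fps_cong 2 (fps_const (c ^ 2) * fps_X ^ (2 * n)) (fps_const c * fps_X ^ (2 * n))"
    unfolding fps_cong_def by (metis dvd_mult2 dvd_triv_left left_diff_distrib)
  moreover have "fps_cong 2 (2 * p * (fps_const c * fps_X ^ n)) 0"
    unfolding fps_cong_def by (simp add: numeral_fps_const mult.assoc)
  ultimately have cong: "fps_cong 2 (p ^ 2 + 2 * p * (fps_const c * fps_X ^ n) + fps_const (c ^ 2) * fps_X ^ (2 * n))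
      ((p oo fps_X ^ 2) + 0 + fps_const c * fps_X ^ (2 * n))"
    using Suc.IH unfolding p_def by (intro fps_cong_add) simp_all
  have "(fps_const c * fps_X ^ n) ^ 2 = fps_const (c ^ 2) * (fps_X :: int fps) ^ (2 * n)"
    by (simp add: power_mult_distrib power_mult[symmetric] mult.commute)
  moreover have "(p + fps_const c * fps_X ^ n) ^ 2
      = p ^ 2 + 2 * p * (fps_const c * fps_X ^ n) + (fps_const c * fps_X ^ n) ^ 2"
    by algebra
  ultimately have square: "(p + fps_const c * fps_X ^ n) ^ 2
      = p ^ 2 + 2 * p * (fps_const c * fps_X ^ n) + fps_const (c ^ 2) * fps_X ^ (2 * n)"
    by simp
  have compose: "(p + fps_const c * fps_X ^ n) oo fps_X ^ 2
      = (p oo fps_X ^ 2) + 0 + fps_const c * fps_X ^ (2 * n)"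
    by (simp add: fps_compose_add_distrib fps_compose_mult_distrib fps_X_power_compose
        power_mult[symmetric])
  show ?case
    unfolding fps_cutoff_Suc p_def[symmetric] c_def[symmetric] square compose by (rule cong)
qed simp

lemma fps_cong_2_square: "fps_cong 2 (a ^ 2) (a oo fps_X ^ 2)"
proof (rule fps_cong_if_agree)
  fix N
  have "fps_agree N (a ^ 2) (fps_cutoff (Suc N) a ^ 2)"
    by (rule fps_agree_power) (simp add: fps_agree_def)
  moreover have "fps_agree (2 * N + 1) (a oo fps_X ^ 2) (fps_cutoff (Suc N) a oo fps_X ^ 2)"
    using fps_agree_compose_X_power[of 2 N a "fps_cutoff (Suc N) a"] by (simp add: fps_agree_def)
  then have "fps_agree N (a oo fps_X ^ 2) (fps_cutoff (Suc N) a oo fps_X ^ 2)"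
    by (rule fps_agree_mono) simp
  ultimately show "\<exists>a' b'. fps_agree N (a ^ 2) a' \<and> fps_agree N (a oo fps_X ^ 2) b' \<and> fps_cong 2 a' b'"
    using fps_cong_2_square_cutoff by blast
qed

lemma fps_cong_power_two:
  assumes "fps_cong 2 (a ^ 2) b"
  shows "fps_cong (2 ^ Suc k) (a ^ 2 ^ Suc k) (b ^ 2 ^ k)"
proof (induction k)
  case (Suc k)
  then have "fps_cong (2 * 2 ^ Suc k) ((a ^ 2 ^ Suc k) ^ 2) ((b ^ 2 ^ k) ^ 2)"
    by (intro fps_cong_square) simp_all
  then show ?case
    by (simp add: power_mult[symmetric] mult.commute)
qed (use assms in simp)

lemma euler_fps_square_cong: "r > 0 \<Longrightarrow> fps_cong 2 (euler_fps r ^ 2) (euler_fps (2 * r))"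
  using fps_cong_2_square[of "euler_fps r"] by (simp add: euler_fps_compose)

lemma euler_fps_power_two_cong:
  "r > 0 \<Longrightarrow> fps_cong (2 ^ Suc k) (euler_fps r ^ 2 ^ Suc k) (euler_fps (2 * r) ^ 2 ^ k)"
  by (intro fps_cong_power_two euler_fps_square_cong)

fun qbinomial :: "'a::comm_ring_1 \<Rightarrow> nat \<Rightarrow> nat \<Rightarrow> 'a" where
  "qbinomial p 0 k = (if k = 0 then 1 else 0)"
| "qbinomial p (Suc N) 0 = 1"
| "qbinomial p (Suc N) (Suc k) = qbinomial p N k + p ^ Suc k * qbinomial p N (Suc k)"

lemma qbinomial_eq_0: "N < k \<Longrightarrow> qbinomial p N k = 0"
proof (induction N arbitrary: k)
  case (Suc N)
  then obtain j where "k = Suc j"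
    by (cases k) auto
  with Suc show ?case
    by simp
qed simp

lemma qbinomial_0_right [simp]: "qbinomial p N 0 = 1"
  by (cases N) auto

lemma qbinomial_Suc_Suc':
  "qbinomial p (Suc N) (Suc k) = p ^ (N - k) * qbinomial p N k + qbinomial p N (Suc k)"
proof (induction N arbitrary: k)
  case 0
  then show ?case
    by (cases k) auto
next
  case (Suc N)
  show ?case
  proof (cases k)
    case 0
    then show ?thesis
      using Suc[of 0] by (simp add: algebra_simps)
  next
    case (Suc j)
    have left: "qbinomial p (Suc (Suc N)) (Suc (Suc j))
        = (p ^ (N - j) * qbinomial p N j + qbinomial p N (Suc j))
          + p ^ Suc (Suc j) * (p ^ (N - Suc j) * qbinomial p N (Suc j) + qbinomial p N (Suc (Suc j)))"
      unfolding qbinomial.simps(3)[of p "Suc N"] Suc.IH[of j] Suc.IH[of "Suc j"] ..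
    have right: "p ^ (Suc N - k) * qbinomial p (Suc N) k + qbinomial p (Suc N) (Suc k)
        = p ^ (N - j) * (qbinomial p N j + p ^ Suc j * qbinomial p N (Suc j))
          + (qbinomial p N (Suc j) + p ^ Suc (Suc j) * qbinomial p N (Suc (Suc j)))"
      unfolding Suc by simp
    have shift: "p ^ Suc (Suc j) * (p ^ (N - Suc j) * qbinomial p N (Suc j))
        = p ^ (N - j) * (p ^ Suc j * qbinomial p N (Suc j))"
    proof (cases "j < N")
      case True
      then have "Suc (Suc j) + (N - Suc j) = (N - j) + Suc j"
        by simp
      then show ?thesis
        by (metis power_add mult.assoc)
    qed (simp add: qbinomial_eq_0)
    show ?thesis
      unfolding left right Suc using shift by (simp add: algebra_simps)
  qed
qed

lemma qbinomial_Suc_Suc_twice: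
  "qbinomial p (Suc (Suc N)) (Suc (Suc k)) = p ^ (N - k) * qbinomial p N k
     + (1 + p ^ Suc N) * qbinomial p N (Suc k) + p ^ Suc (Suc k) * qbinomial p N (Suc (Suc k))"
proof -
  have "qbinomial p (Suc (Suc N)) (Suc (Suc k))
      = p ^ (N - k) * (qbinomial p N k + p ^ Suc k * qbinomial p N (Suc k))
        + (qbinomial p N (Suc k) + p ^ Suc (Suc k) * qbinomial p N (Suc (Suc k)))"
    using qbinomial_Suc_Suc'[of p "Suc N" "Suc k"] by simp
  moreover have "p ^ (N - k) * (p ^ Suc k * qbinomial p N (Suc k)) = p ^ Suc N * qbinomial p N (Suc k)"
  proof (cases "k \<le> N")
    case True
    then have "(N - k) + Suc k = Suc N"
      by simp
    then show ?thesis
      by (metis power_add mult.assoc)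
  qed (simp add: qbinomial_eq_0)
  ultimately show ?thesis
    by (simp add: algebra_simps)
qed

definition qpochhammer :: "'a::comm_ring_1 \<Rightarrow> nat \<Rightarrow> 'a" where
  "qpochhammer p n = (\<Prod>i=1..n. 1 - p ^ i)"

lemma qpochhammer_0 [simp]: "qpochhammer p 0 = 1"
  by (simp add: qpochhammer_def)

lemma qpochhammer_Suc: "qpochhammer p (Suc n) = qpochhammer p n * (1 - p ^ Suc n)"
  by (simp add: qpochhammer_def)

lemma qbinomial_qpochhammer:
  "k \<le> N \<Longrightarrow> qbinomial p N k * qpochhammer p k * qpochhammer p (N - k) = qpochhammer p N"
proof (induction N arbitrary: k)
  case (Suc N)
  show ?case
  proof (cases k)
    case (Suc j)
    have "j \<le> N"
      using Suc.prems Suc by simp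
    have left: "qbinomial p N j * qpochhammer p (Suc j) * qpochhammer p (N - j)
        = qpochhammer p N * (1 - p ^ Suc j)"
    proof -
      have "qbinomial p N j * qpochhammer p (Suc j) * qpochhammer p (N - j)
          = (qbinomial p N j * qpochhammer p j * qpochhammer p (N - j)) * (1 - p ^ Suc j)"
        by (simp only: qpochhammer_Suc mult_ac)
      then show ?thesis
        using Suc.IH[OF \<open>j \<le> N\<close>] by simp
    qed
    have right: "p ^ Suc j * qbinomial p N (Suc j) * qpochhammer p (Suc j) * qpochhammer p (N - j)
        = qpochhammer p N * (p ^ Suc j - p ^ Suc N)"
    proof (cases "j < N")
      case True
      have diff: "N - j = Suc (N - Suc j)"
        using True by simp
      have "Suc j + (N - j) = Suc N"
        using True by simp
      then have pow: "p ^ Suc j * p ^ (N - j) = p ^ Suc N"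
        by (metis power_add)
      have "p ^ Suc j * qbinomial p N (Suc j) * qpochhammer p (Suc j) * qpochhammer p (N - j)
          = p ^ Suc j * (1 - p ^ (N - j)) * (qbinomial p N (Suc j) * qpochhammer p (Suc j) * qpochhammer p (N - Suc j))"
        by (simp only: diff qpochhammer_Suc) (simp add: algebra_simps)
      also have "\<dots> = p ^ Suc j * (1 - p ^ (N - j)) * qpochhammer p N"
        using Suc.IH[of "Suc j"] True by simp
      also have "\<dots> = qpochhammer p N * (p ^ Suc j - p ^ Suc j * p ^ (N - j))"
        by (simp add: algebra_simps)
      finally show ?thesis
        unfolding pow .
    qed (use \<open>j \<le> N\<close> in \<open>simp add: qbinomial_eq_0\<close>)
    have "qbinomial p (Suc N) k * qpochhammer p k * qpochhammer p (Suc N - k)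
        = qbinomial p N j * qpochhammer p (Suc j) * qpochhammer p (N - j)
          + p ^ Suc j * qbinomial p N (Suc j) * qpochhammer p (Suc j) * qpochhammer p (N - j)"
      by (simp add: Suc algebra_simps)
    also have "\<dots> = qpochhammer p (Suc N)"
      by (simp only: left right) (simp add: qpochhammer_Suc algebra_simps)
    finally show ?thesis .
  qed simp
qed simp

lemma sum_mult_quadratic:
  fixes c d :: "nat \<Rightarrow> 'a::comm_ring_1"
  assumes "\<And>k. M < k \<Longrightarrow> c k = 0"
    and "d 0 = a * c 0" "d 1 = b * c 0 + a * c 1"
    and "\<And>k. d (Suc (Suc k)) = a * c k + b * c (Suc k) + a * c (Suc (Suc k))"
  shows "(\<Sum>k\<le>M + 2. d k * w ^ k) = (a * w ^ 2 + b * w + a) * (\<Sum>k\<le>M. c k * w ^ k)"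
proof -
  define S where "S = (\<Sum>k\<le>M. c k * w ^ k)"
  have S_ext: "S = (\<Sum>k\<le>M + j. c k * w ^ k)" for j
    unfolding S_def by (induction j) (simp_all add: assms(1))
  have "S = (\<Sum>k\<le>Suc M. c k * w ^ k)"
    using S_ext[of 1] by simp
  also have "\<dots> = c 0 + (\<Sum>k\<le>M. c (Suc k) * w ^ Suc k)"
    by (simp only: sum.atMost_Suc_shift) simp
  finally have S1: "(\<Sum>k\<le>M. c (Suc k) * w ^ Suc k) = S - c 0"
    by simp
  have "S = (\<Sum>k\<le>Suc (Suc M). c k * w ^ k)"
    using S_ext[of 2] by (simp add: numeral_2_eq_2)
  also have "\<dots> = c 0 + c 1 * w + (\<Sum>k\<le>M. c (Suc (Suc k)) * w ^ Suc (Suc k))"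
    by (simp only: sum.atMost_Suc_shift) simp
  finally have S2: "(\<Sum>k\<le>M. c (Suc (Suc k)) * w ^ Suc (Suc k)) = S - c 0 - c 1 * w"
    by simp
  have "(\<Sum>k\<le>M + 2. d k * w ^ k) = (\<Sum>k\<le>Suc (Suc M). d k * w ^ k)"
    by (simp add: numeral_2_eq_2)
  also have "\<dots> = d 0 + d 1 * w + (\<Sum>k\<le>M. d (Suc (Suc k)) * w ^ Suc (Suc k))"
    by (simp only: sum.atMost_Suc_shift) simp
  also have "(\<Sum>k\<le>M. d (Suc (Suc k)) * w ^ Suc (Suc k)) = a * w ^ 2 * S
      + b * w * (\<Sum>k\<le>M. c (Suc k) * w ^ Suc k) + a * (\<Sum>k\<le>M. c (Suc (Suc k)) * w ^ Suc (Suc k))"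
    unfolding assms(4) S_def by (simp add: sum.distrib sum_distrib_left algebra_simps power2_eq_square)
  finally show ?thesis
    unfolding S1 S2 assms(2,3) S_def[symmetric] by (simp add: algebra_simps power2_eq_square)
qed

definition jtp_exponent :: "nat \<Rightarrow> nat \<Rightarrow> nat" where
  "jtp_exponent n k = nat ((int k - int n) ^ 2)"

definition jtp_coeff :: "'a::comm_ring_1 \<Rightarrow> nat \<Rightarrow> nat \<Rightarrow> 'a" where
  "jtp_coeff q n k = qbinomial (q ^ 2) (2 * n) k * q ^ jtp_exponent n k"

lemma int_jtp_exponent: "int (jtp_exponent n k) = (int k - int n) ^ 2"
  by (simp add: jtp_exponent_def)

lemma jtp_coeff_eq_0: "2 * n < k \<Longrightarrow> jtp_coeff q n k = 0"
  by (simp add: jtp_coeff_def qbinomial_eq_0)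

lemma jtp_coeff_Suc_0: "jtp_coeff q (Suc n) 0 = q ^ (2 * n + 1) * jtp_coeff q n 0"
proof -
  have "jtp_exponent (Suc n) 0 = (2 * n + 1) + jtp_exponent n 0"
    by (rule of_nat_eq_iff[where 'a=int, THEN iffD1]) (simp add: int_jtp_exponent power2_eq_square algebra_simps)
  then show ?thesis
    by (simp add: jtp_coeff_def power_add)
qed

lemma jtp_coeff_Suc_1:
  "jtp_coeff q (Suc n) 1 = (1 + q ^ (4 * n + 2)) * jtp_coeff q n 0 + q ^ (2 * n + 1) * jtp_coeff q n 1"
proof -
  have "(q ^ 2) ^ Suc (2 * n) = q ^ (4 * n + 2)"
    by (simp only: power_mult[symmetric]) (simp add: algebra_simps)
  moreover have "qbinomial (q ^ 2) (2 * Suc n) 1 = (q ^ 2) ^ Suc (2 * n) + (1 + q ^ 2 * qbinomial (q ^ 2) (2 * n) 1)"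
    using qbinomial_Suc_Suc'[of "q ^ 2" "Suc (2 * n)" 0] by simp
  ultimately have binomial: "qbinomial (q ^ 2) (2 * Suc n) 1 = 1 + q ^ (4 * n + 2) + q ^ 2 * qbinomial (q ^ 2) (2 * n) 1"
    by (simp add: algebra_simps)
  have exponent0: "jtp_exponent (Suc n) 1 = jtp_exponent n 0"
    by (simp add: jtp_exponent_def)
  have exponent1: "q ^ 2 * qbinomial (q ^ 2) (2 * n) 1 * q ^ jtp_exponent (Suc n) 1
      = q ^ (2 * n + 1) * jtp_coeff q n 1"
  proof (cases n)
    case (Suc m)
    define G where "G = qbinomial (q ^ 2) (2 * n) 1"
    have "2 + jtp_exponent (Suc n) 1 = (2 * n + 1) + jtp_exponent n 1"
      by (rule of_nat_eq_iff[where 'a=int, THEN iffD1]) (simp add: int_jtp_exponent power2_eq_square algebra_simps Suc)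
    then have "q ^ 2 * q ^ jtp_exponent (Suc n) 1 = q ^ (2 * n + 1) * q ^ jtp_exponent n 1"
      by (metis power_add)
    then have "G * (q ^ 2 * q ^ jtp_exponent (Suc n) 1) = G * (q ^ (2 * n + 1) * q ^ jtp_exponent n 1)"
      by simp
    then show ?thesis
      unfolding jtp_coeff_def G_def[symmetric] by (simp only: mult_ac)
  qed (simp add: jtp_coeff_def qbinomial_eq_0)
  have "jtp_coeff q (Suc n) 1 = (1 + q ^ (4 * n + 2)) * q ^ jtp_exponent (Suc n) 1
      + q ^ 2 * qbinomial (q ^ 2) (2 * n) 1 * q ^ jtp_exponent (Suc n) 1"
    unfolding jtp_coeff_def binomial by (rule distrib_right)
  also have "\<dots> = (1 + q ^ (4 * n + 2)) * jtp_coeff q n 0 + q ^ (2 * n + 1) * jtp_coeff q n 1"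
    unfolding exponent1 unfolding exponent0 by (simp add: jtp_coeff_def)
  finally show ?thesis .
qed

lemma jtp_coeff_Suc_Suc:
  "jtp_coeff q (Suc n) (Suc (Suc k)) = q ^ (2 * n + 1) * jtp_coeff q n k
     + (1 + q ^ (4 * n + 2)) * jtp_coeff q n (Suc k) + q ^ (2 * n + 1) * jtp_coeff q n (Suc (Suc k))"
proof -
  define G where "G j = qbinomial (q ^ 2) (2 * n) j" for j
  define e where "e = jtp_exponent (Suc n) (Suc (Suc k))"
  have first: "(q ^ 2) ^ (2 * n - k) * G k * q ^ e = q ^ (2 * n + 1) * jtp_coeff q n k"
  proof (cases "k \<le> 2 * n")
    case True
    then have "int (2 * (2 * n - k)) = 4 * int n - 2 * int k"
      by (simp add: of_nat_diff)
    then have "2 * (2 * n - k) + e = (2 * n + 1) + jtp_exponent n k"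
      unfolding e_def by (intro of_nat_eq_iff[where 'a=int, THEN iffD1])
        (simp only: of_nat_add, simp add: int_jtp_exponent power2_eq_square algebra_simps)
    then have "(q ^ 2) ^ (2 * n - k) * q ^ e = q ^ (2 * n + 1) * q ^ jtp_exponent n k"
      by (metis power_add power_mult)
    then have "G k * ((q ^ 2) ^ (2 * n - k) * q ^ e) = G k * (q ^ (2 * n + 1) * q ^ jtp_exponent n k)"
      by simp
    then show ?thesis
      unfolding jtp_coeff_def G_def[symmetric] by (simp only: mult_ac)
  qed (simp add: G_def jtp_coeff_def qbinomial_eq_0)
  have middle: "e = jtp_exponent n (Suc k)"
    by (simp add: e_def jtp_exponent_def algebra_simps)
  have "2 * Suc (Suc k) + e = (2 * n + 1) + jtp_exponent n (Suc (Suc k))"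
    unfolding e_def by (rule of_nat_eq_iff[where 'a=int, THEN iffD1])
      (simp add: int_jtp_exponent power2_eq_square algebra_simps)
  then have "(q ^ 2) ^ Suc (Suc k) * q ^ e = q ^ (2 * n + 1) * q ^ jtp_exponent n (Suc (Suc k))"
    by (metis power_add power_mult)
  then have "G (Suc (Suc k)) * ((q ^ 2) ^ Suc (Suc k) * q ^ e)
      = G (Suc (Suc k)) * (q ^ (2 * n + 1) * q ^ jtp_exponent n (Suc (Suc k)))"
    by simp
  then have last: "(q ^ 2) ^ Suc (Suc k) * G (Suc (Suc k)) * q ^ e = q ^ (2 * n + 1) * jtp_coeff q n (Suc (Suc k))"
    unfolding jtp_coeff_def G_def[symmetric] by (simp only: mult_ac)
  have "(q ^ 2) ^ Suc (2 * n) = q ^ (4 * n + 2)"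
    by (simp only: power_mult[symmetric]) (simp add: algebra_simps)
  moreover have "jtp_coeff q (Suc n) (Suc (Suc k)) = (q ^ 2) ^ (2 * n - k) * G k * q ^ e
      + (1 + (q ^ 2) ^ Suc (2 * n)) * (G (Suc k) * q ^ e) + (q ^ 2) ^ Suc (Suc k) * G (Suc (Suc k)) * q ^ e"
    using qbinomial_Suc_Suc_twice[of "q ^ 2" "2 * n" k]
    by (simp add: jtp_coeff_def G_def e_def algebra_simps)
  ultimately show ?thesis
    unfolding first last by (simp add: middle jtp_coeff_def G_def)
qed

theorem finite_jacobi_triple_product:
  "(\<Sum>k\<le>2 * n. jtp_coeff q n k * w ^ k) = (\<Prod>i=1..n. (1 + w * q ^ (2 * i - 1)) * (w + q ^ (2 * i - 1)))"
proof (induction n)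
  case 0
  show ?case
    by (simp add: jtp_coeff_def jtp_exponent_def)
next
  case (Suc n)
  have "2 * Suc n = 2 * n + 2"
    by simp
  then have "(\<Sum>k\<le>2 * Suc n. jtp_coeff q (Suc n) k * w ^ k)
      = (q ^ (2 * n + 1) * w ^ 2 + (1 + q ^ (4 * n + 2)) * w + q ^ (2 * n + 1))
        * (\<Sum>k\<le>2 * n. jtp_coeff q n k * w ^ k)"
    by (simp only:) (rule sum_mult_quadratic[where c = "jtp_coeff q n" and M = "2 * n"],
      simp_all only: jtp_coeff_eq_0 jtp_coeff_Suc_0 jtp_coeff_Suc_1 jtp_coeff_Suc_Suc)
  also have "q ^ (2 * n + 1) * w ^ 2 + (1 + q ^ (4 * n + 2)) * w + q ^ (2 * n + 1)
      = (1 + w * q ^ (2 * Suc n - 1)) * (w + q ^ (2 * Suc n - 1))"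
    by (simp add: algebra_simps power2_eq_square power_add[symmetric])
  also have "(\<Sum>k\<le>2 * n. jtp_coeff q n k * w ^ k)
      = (\<Prod>i=1..n. (1 + w * q ^ (2 * i - 1)) * (w + q ^ (2 * i - 1)))"
    by (rule Suc.IH)
  finally show ?case
    by (subst prod.nat_ivl_Suc') simp_all
qed

lemma qpochhammer_X_power: "qpochhammer (fps_X ^ r) n = euler_trunc n r"
  by (simp add: qpochhammer_def euler_trunc_def power_mult[symmetric] mult.commute)

lemma euler_trunc_2_agree: "m \<le> j \<Longrightarrow> fps_agree (2 * m + 1) (euler_trunc j 2) (euler_fps 2)"
  using euler_trunc_agree_euler_fps[of 2 m j] by simp

lemma unit_inv_euler_trunc_2_agree:
  "m \<le> j \<Longrightarrow> fps_agree (2 * m + 1) (unit_inv (euler_trunc j 2)) (unit_inv (euler_fps 2))"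
  by (rule fps_agree_right_inverse[OF unit_inv_right unit_inv_right euler_trunc_2_agree])
    (simp_all add: euler_trunc_nth_0)

text \<open>Since the Gaussian binomial is a ratio of three truncated Euler products in q^2,
  its central coefficients approximate 1/f_2.\<close>

lemma qbinomial_agree:
  assumes "k \<le> N" "m \<le> k" "m \<le> N - k"
  shows "fps_agree (2 * m + 1) (qbinomial (fps_X ^ 2) N k) (unit_inv (euler_fps 2))"
proof -
  define g where "g = qbinomial (fps_X ^ 2 :: int fps) N k"
  have unit: "euler_trunc j 2 * unit_inv (euler_trunc j 2) = 1" for j
    by (rule unit_inv_right) (simp add: euler_trunc_nth_0)
  have prod: "g * euler_trunc k 2 * euler_trunc (N - k) 2 = euler_trunc N 2"
    using qbinomial_qpochhammer[OF assms(1), of "fps_X ^ 2 :: int fps"]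
    by (simp add: g_def qpochhammer_X_power)
  have "euler_trunc N 2 * unit_inv (euler_trunc k 2) * unit_inv (euler_trunc (N - k) 2)
      = g * (euler_trunc k 2 * unit_inv (euler_trunc k 2))
          * (euler_trunc (N - k) 2 * unit_inv (euler_trunc (N - k) 2))"
    unfolding prod[symmetric] by (simp add: mult_ac)
  then have "g = euler_trunc N 2 * unit_inv (euler_trunc k 2) * unit_inv (euler_trunc (N - k) 2)"
    by (simp add: unit)
  moreover have "fps_agree (2 * m + 1)
      (euler_trunc N 2 * unit_inv (euler_trunc k 2) * unit_inv (euler_trunc (N - k) 2))
      (euler_fps 2 * unit_inv (euler_fps 2) * unit_inv (euler_fps 2))"
    using assms by (intro fps_agree_mult euler_trunc_2_agree unit_inv_euler_trunc_2_agree) simp_all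
  ultimately show ?thesis
    by (simp add: g_def unit_inv_right)
qed

definition bilateral_summable :: "(int \<Rightarrow> 'a::zero fps) \<Rightarrow> bool" where
  "bilateral_summable a \<longleftrightarrow> (\<forall>j i. int i + 1 < \<bar>j\<bar> \<longrightarrow> a j $ i = 0)"

text \<open>The sum of a j over all integers j; for a summable family the terms with |j| > i + 1
  do not contribute to the coefficient of q^i.\<close>

definition bilateral_sum :: "(int \<Rightarrow> 'a::comm_monoid_add fps) \<Rightarrow> 'a fps" where
  "bilateral_sum a = Abs_fps (\<lambda>i. \<Sum>j\<in>{- int i - 1..int i + 1}. a j $ i)"

lemma sum_atMost_shift_int: "(\<Sum>k\<le>2 * n. f (int k - int n)) = (\<Sum>j\<in>{- int n..int n}. f j)"
  by (rule sum.reindex_bij_witness[of _ "\<lambda>j. nat (j + int n)" "\<lambda>k. int k - int n"]) auto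

lemma bilateral_sum_agree:
  assumes "bilateral_summable a" "D < n"
  shows "fps_agree D (\<Sum>k\<le>2 * n. a (int k - int n)) (bilateral_sum a)"
  unfolding fps_agree_def
proof (intro allI impI)
  fix i assume i: "i \<le> D"
  have "(\<Sum>k\<le>2 * n. a (int k - int n)) $ i = (\<Sum>j\<in>{- int n..int n}. a j $ i)"
    by (simp add: fps_sum_nth sum_atMost_shift_int[of "\<lambda>j. a j $ i"])
  also have "\<dots> = (\<Sum>j\<in>{- int i - 1..int i + 1}. a j $ i)"
  proof (rule sum.mono_neutral_right)
    show "{- int i - 1..int i + 1} \<subseteq> {- int n..int n}"
      using i assms(2) by auto
    show "\<forall>j\<in>{- int n..int n} - {- int i - 1..int i + 1}. a j $ i = 0"
      using assms(1) unfolding bilateral_summable_def by auto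
  qed simp
  finally show "(\<Sum>k\<le>2 * n. a (int k - int n)) $ i = bilateral_sum a $ i"
    by (simp add: bilateral_sum_def)
qed

text \<open>The weight of a j tends to 1/f_2 while a j has order at least |j| - 1, so only finitely
  many terms matter below any given order.\<close>

lemma qbinomial_weighted_sum_agree:
  assumes "bilateral_summable a" "D < n"
  shows "fps_agree D (\<Sum>k\<le>2 * n. qbinomial (fps_X ^ 2) (2 * n) k * a (int k - int n))
    (unit_inv (euler_fps 2) * bilateral_sum a)"
proof -
  have "fps_agree D (qbinomial (fps_X ^ 2) (2 * n) k * a (int k - int n))
      (unit_inv (euler_fps 2) * a (int k - int n))" if k: "k \<le> 2 * n" for k
  proof -
    define m where "m = min k (2 * n - k)"
    define s where "s = nat (\<bar>int k - int n\<bar> - 1)"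
    have "fps_agree (2 * m + 1 + s) (qbinomial (fps_X ^ 2) (2 * n) k * a (int k - int n))
        (unit_inv (euler_fps 2) * a (int k - int n))"
    proof (rule fps_agree_mult_high_order)
      show "fps_agree (2 * m + 1) (qbinomial (fps_X ^ 2) (2 * n) k) (unit_inv (euler_fps 2))"
        using k by (intro qbinomial_agree) (simp_all add: m_def)
      show "a (int k - int n) $ i = 0" if "i < s" for i
        using assms(1) that unfolding bilateral_summable_def s_def by auto
    qed
    moreover have "D \<le> 2 * m + 1 + s"
      using assms(2) k unfolding m_def s_def by auto
    ultimately show ?thesis
      by (rule fps_agree_mono)
  qed
  then have "fps_agree D (\<Sum>k\<le>2 * n. qbinomial (fps_X ^ 2) (2 * n) k * a (int k - int n))
      (\<Sum>k\<le>2 * n. unit_inv (euler_fps 2) * a (int k - int n))"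
    by (intro fps_agree_sum) simp
  moreover have "fps_agree D (\<Sum>k\<le>2 * n. unit_inv (euler_fps 2) * a (int k - int n))
      (unit_inv (euler_fps 2) * bilateral_sum a)"
    unfolding sum_distrib_left[symmetric] by (intro fps_agree_mult fps_agree_refl bilateral_sum_agree assms)
  ultimately show ?thesis
    by (rule fps_agree_trans)
qed

lemma bilateral_sum_compose_uminus:
  "bilateral_sum a oo - fps_X = bilateral_sum (\<lambda>j. a j oo - (fps_X :: 'a::comm_ring_1 fps))"
  by (simp add: fps_eq_iff fps_compose_uminus' bilateral_sum_def sum_distrib_left)

lemma bilateral_summable_compose_uminus:
  fixes a :: "int \<Rightarrow> 'a::comm_ring_1 fps"
  shows "bilateral_summable a \<Longrightarrow> bilateral_summable (\<lambda>j. a j oo - fps_X)"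
  by (simp add: bilateral_summable_def fps_compose_uminus')

lemma bilateral_summable_X_power:
  assumes "\<And>j. \<bar>j\<bar> - 1 \<le> f j"
  shows "bilateral_summable (\<lambda>j. fps_X ^ nat (f j))"
  unfolding bilateral_summable_def
proof (intro allI impI)
  fix j :: int and i :: nat
  assume "int i + 1 < \<bar>j\<bar>"
  then have "i \<noteq> nat (f j)"
    using assms[of j] by auto
  then show "(fps_X ^ nat (f j) :: 'a fps) $ i = 0"
    by simp
qed

lemma bilateral_sum_X_power_nth:
  assumes "\<And>j. \<bar>j\<bar> - 1 \<le> f j" "\<And>j. 0 \<le> f j"
  shows "bilateral_sum (\<lambda>j. fps_X ^ nat (f j)) $ i = (of_nat (card {j. f j = int i}) :: 'a::comm_ring_1)"
proof -
  have "{j \<in> {- int i - 1..int i + 1}. i = nat (f j)} = {j. f j = int i}"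
  proof (intro set_eqI iffI)
    fix j assume "j \<in> {j \<in> {- int i - 1..int i + 1}. i = nat (f j)}"
    then show "j \<in> {j. f j = int i}"
      using assms(2)[of j] by auto
  next
    fix j assume "j \<in> {j. f j = int i}"
    then show "j \<in> {j \<in> {- int i - 1..int i + 1}. i = nat (f j)}"
      using assms(1)[of j] by auto
  qed
  moreover have "bilateral_sum (\<lambda>j. fps_X ^ nat (f j)) $ i
      = (\<Sum>j\<in>{- int i - 1..int i + 1}. if i = nat (f j) then 1 else (0 :: 'a))"
    by (simp add: bilateral_sum_def)
  ultimately show ?thesis
    by (simp flip: sum.inter_filter)
qed

lemma abs_le_square: "\<bar>j :: int\<bar> \<le> j ^ 2"
proof (cases "j = 0")
  case False
  then have "\<bar>j\<bar> * 1 \<le> \<bar>j\<bar> * \<bar>j\<bar>"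
    by (intro mult_left_mono) auto
  then show ?thesis
    by (simp add: power2_eq_square abs_mult[symmetric])
qed simp

lemma abs_le_square_plus: "\<bar>j :: int\<bar> - 1 \<le> j ^ 2 + j"
proof (cases "j \<ge> 0")
  case True
  then show ?thesis
    using abs_le_square[of j] by simp
next
  case False
  have "0 \<le> (j + 1) ^ 2"
    by simp
  then show ?thesis
    using False by (simp add: power2_eq_square algebra_simps)
qed

lemma square_plus_nonneg: "0 \<le> (j :: int) ^ 2 + j"
proof (cases "j \<ge> 0")
  case False
  then have "0 \<le> j * (j + 1)"
    by (simp add: mult_nonpos_nonpos)
  then show ?thesis
    by (simp add: power2_eq_square algebra_simps)
qed simp

lemma prod_split_odd_even:
  fixes f :: "nat \<Rightarrow> 'a::comm_monoid_mult"
  shows "(\<Prod>i=1..2 * n. f i) = (\<Prod>i=1..n. f (2 * i - 1)) * (\<Prod>i=1..n. f (2 * i))"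
proof (induction n)
  case (Suc n)
  have "2 * Suc n = Suc (Suc (2 * n))"
    by simp
  then have "(\<Prod>i=1..2 * Suc n. f i) = (\<Prod>i=1..2 * n. f i) * f (Suc (2 * n)) * f (Suc (Suc (2 * n)))"
    by (simp add: prod.nat_ivl_Suc' mult_ac)
  then show ?case
    using Suc by (simp add: prod.nat_ivl_Suc' mult_ac)
qed simp

lemma fps_agree_quotient_euler_trunc_2:
  assumes "p * euler_trunc m 2 = t" "fps_agree D t g" "D \<le> 2 * m + 1"
  shows "fps_agree D p (g * unit_inv (euler_fps 2))"
proof -
  have "p = p * (euler_trunc m 2 * unit_inv (euler_trunc m 2))"
    by (simp add: unit_inv_right euler_trunc_nth_0)
  then have "p = t * unit_inv (euler_trunc m 2)"
    using assms(1) by (simp add: mult.assoc[symmetric])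
  moreover have "fps_agree D (unit_inv (euler_trunc m 2)) (unit_inv (euler_fps 2))"
    using unit_inv_euler_trunc_2_agree[of m m] assms(3) by (simp add: fps_agree_mono)
  ultimately show ?thesis
    using assms(2) by (simp add: fps_agree_mult)
qed

definition phi :: "int fps" where
  "phi = bilateral_sum (\<lambda>j. fps_X ^ nat (j ^ 2))"

text \<open>Ramanujan's psi(q) = sum over n of q^(n(n+1)/2), introduced through its product formula.\<close>

definition psi :: "int fps" where
  "psi = euler_fps 2 ^ 2 * unit_inv (euler_fps 1)"

lemma psi_compose_X_power:
  "k > 0 \<Longrightarrow> psi oo fps_X ^ k = euler_fps (2 * k) ^ 2 * unit_inv (euler_fps k)"
  by (simp add: psi_def fps_compose_mult_distrib fps_compose_power[symmetric] unit_inv_compose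
      euler_fps_compose mult.commute)

lemma unit_inv_mult_eq_iff: "b $ 0 = 1 \<Longrightarrow> unit_inv b * x = y \<longleftrightarrow> x = b * y"
  by (metis mult.assoc mult_1_left unit_inv_left unit_inv_right)

lemma unit_inv_neq_0 [simp]: "unit_inv a \<noteq> 0"
  using unit_inv_nth_0[of a] by (metis fps_zero_nth zero_neq_one)

lemma finite_jacobi_phi_neg:
  "(\<Sum>k\<le>2 * n. qbinomial (fps_X ^ 2) (2 * n) k * (fps_X ^ nat ((int k - int n) ^ 2) oo - fps_X))
    = (\<Prod>i=1..n. 1 - fps_X ^ (2 * i - 1) :: int fps) ^ 2"
proof -
  have "(\<Sum>k\<le>2 * n. qbinomial (fps_X ^ 2) (2 * n) k * (fps_X ^ nat ((int k - int n) ^ 2) oo - fps_X))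
      = (\<Sum>k\<le>2 * n. jtp_coeff (- fps_X :: int fps) n k * 1 ^ k)"
    by (simp add: jtp_coeff_def jtp_exponent_def fps_X_power_compose)
  also have "\<dots> = (\<Prod>i=1..n. (1 + 1 * (- fps_X) ^ (2 * i - 1)) * (1 + (- fps_X) ^ (2 * i - 1)))"
    by (rule finite_jacobi_triple_product)
  also have "\<dots> = (\<Prod>i=1..n. (1 - fps_X ^ (2 * i - 1)) ^ 2)"
  proof (rule prod.cong)
    fix i assume "i \<in> {1..n}"
    then have "(- fps_X :: int fps) ^ (2 * i - 1) = - (fps_X ^ (2 * i - 1))"
      by (intro power_minus_odd) auto
    then show "(1 + 1 * (- fps_X) ^ (2 * i - 1)) * (1 + (- fps_X) ^ (2 * i - 1))
        = (1 - fps_X ^ (2 * i - 1) :: int fps) ^ 2"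
      by (simp add: power2_eq_square)
  qed simp
  finally show ?thesis
    by (simp add: prod_power_distrib)
qed

lemma prod_one_minus_X_odd_agree:
  "fps_agree (2 * n) (\<Prod>i=1..n. 1 - fps_X ^ (2 * i - 1)) (euler_fps 1 * unit_inv (euler_fps 2))"
proof (rule fps_agree_quotient_euler_trunc_2)
  show "(\<Prod>i=1..n. 1 - fps_X ^ (2 * i - 1)) * euler_trunc n 2 = euler_trunc (2 * n) 1"
    using prod_split_odd_even[of "\<lambda>i. 1 - fps_X ^ i :: int fps" n] by (simp add: euler_trunc_def)
qed (simp_all add: euler_fps_agree)

theorem euler_square_eq_phi: "euler_fps 1 ^ 2 = euler_fps 2 * (phi oo - fps_X)"
proof -
  define a where "a = (\<lambda>j. (fps_X ^ nat (j ^ 2) :: int fps) oo - fps_X)"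
  have "bilateral_summable (\<lambda>j. fps_X ^ nat (j ^ 2) :: int fps)"
    by (rule bilateral_summable_X_power, rule order.trans[OF _ abs_le_square]) simp
  then have summable: "bilateral_summable a"
    unfolding a_def by (rule bilateral_summable_compose_uminus)
  have "(euler_fps 1 * unit_inv (euler_fps 2)) ^ 2 = unit_inv (euler_fps 2) * bilateral_sum a"
  proof (rule fps_eq_if_agree)
    fix D
    have "fps_agree D (\<Sum>k\<le>2 * (D + 1). qbinomial (fps_X ^ 2) (2 * (D + 1)) k * a (int k - int (D + 1)))
        (unit_inv (euler_fps 2) * bilateral_sum a)"
      by (rule qbinomial_weighted_sum_agree[OF summable]) simp
    moreover have "fps_agree D ((\<Prod>i=1..D + 1. 1 - fps_X ^ (2 * i - 1)) ^ 2)
        ((euler_fps 1 * unit_inv (euler_fps 2)) ^ 2)"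
      by (rule fps_agree_power, rule fps_agree_mono[OF prod_one_minus_X_odd_agree]) simp
    ultimately show "fps_agree D ((euler_fps 1 * unit_inv (euler_fps 2)) ^ 2) (unit_inv (euler_fps 2) * bilateral_sum a)"
      unfolding a_def finite_jacobi_phi_neg using fps_agree_sym fps_agree_trans by blast
  qed
  then have "unit_inv (euler_fps 2) * (unit_inv (euler_fps 2) * euler_fps 1 ^ 2)
      = unit_inv (euler_fps 2) * (phi oo - fps_X)"
    by (simp add: a_def phi_def bilateral_sum_compose_uminus power2_eq_square mult_ac)
  then show ?thesis
    by (simp add: unit_inv_mult_eq_iff)
qed

lemma finite_jacobi_psi:
  "(\<Sum>k\<le>2 * n. qbinomial (fps_X ^ 2) (2 * n) k * fps_X ^ nat ((int k - int n) ^ 2 + (int k - int n)))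
    = (\<Prod>i=1..n. 1 + fps_X ^ (2 * i)) * (\<Prod>i=1..n. 1 + fps_X ^ (2 * (i - 1)) :: int fps)"
proof -
  have "jtp_coeff (fps_X :: int fps) n k * fps_X ^ k
      = fps_X ^ n * (qbinomial (fps_X ^ 2) (2 * n) k * fps_X ^ nat ((int k - int n) ^ 2 + (int k - int n)))"
    for k :: nat
  proof -
    have "jtp_exponent n k + k = n + nat ((int k - int n) ^ 2 + (int k - int n))"
      using square_plus_nonneg[of "int k - int n"]
      by (intro of_nat_eq_iff[where 'a=int, THEN iffD1]) (simp add: int_jtp_exponent)
    then have "(fps_X :: int fps) ^ jtp_exponent n k * fps_X ^ k
        = fps_X ^ n * fps_X ^ nat ((int k - int n) ^ 2 + (int k - int n))"
      by (simp only: power_add[symmetric])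
    then show ?thesis
      unfolding jtp_coeff_def mult.assoc by (simp only:) (rule mult.left_commute)
  qed
  then have "fps_X ^ n
      * (\<Sum>k\<le>2 * n. qbinomial (fps_X ^ 2) (2 * n) k * fps_X ^ nat ((int k - int n) ^ 2 + (int k - int n)))
      = (\<Sum>k\<le>2 * n. jtp_coeff (fps_X :: int fps) n k * fps_X ^ k)"
    by (simp add: sum_distrib_left)
  also have "\<dots> = (\<Prod>i=1..n. (1 + fps_X * fps_X ^ (2 * i - 1)) * (fps_X + fps_X ^ (2 * i - 1)))"
    by (rule finite_jacobi_triple_product)
  also have "\<dots> = (\<Prod>i=1..n. fps_X * ((1 + fps_X ^ (2 * i)) * (1 + fps_X ^ (2 * (i - 1)))))"
  proof (rule prod.cong)
    fix i assume "i \<in> {1..n}"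
    then obtain t where t: "i = Suc t"
      by (cases i) auto
    show "(1 + fps_X * fps_X ^ (2 * i - 1)) * (fps_X + fps_X ^ (2 * i - 1))
        = fps_X * ((1 + fps_X ^ (2 * i)) * (1 + fps_X ^ (2 * (i - 1))) :: int fps)"
      unfolding t by (simp add: algebra_simps)
  qed simp
  also have "\<dots> = fps_X ^ n * ((\<Prod>i=1..n. 1 + fps_X ^ (2 * i)) * (\<Prod>i=1..n. 1 + fps_X ^ (2 * (i - 1))))"
    by (simp add: prod.distrib)
  finally show ?thesis
    by simp
qed

lemma prod_one_plus_X_even_shift:
  "(\<Prod>i=1..Suc m. 1 + fps_X ^ (2 * (i - 1)) :: int fps) = 2 * (\<Prod>i=1..m. 1 + fps_X ^ (2 * i))"
proof (induction m)
  case (Suc m)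
  then show ?case
    by (simp add: prod.nat_ivl_Suc'[of 1 "Suc m"] prod.nat_ivl_Suc'[of 1 m] mult_ac)
qed simp

lemma prod_one_plus_X_even_agree:
  "fps_agree (2 * m + 1) (\<Prod>i=1..m. 1 + fps_X ^ (2 * i)) (euler_fps 4 * unit_inv (euler_fps 2))"
proof (rule fps_agree_quotient_euler_trunc_2)
  have "(1 + fps_X ^ (2 * i)) * (1 - fps_X ^ (2 * i)) = (1 - fps_X ^ (4 * i) :: int fps)" for i
    by (simp add: algebra_simps power_add[symmetric])
  then show "(\<Prod>i=1..m. 1 + fps_X ^ (2 * i)) * euler_trunc m 2 = euler_trunc m 4"
    unfolding euler_trunc_def prod.distrib[symmetric] by (intro prod.cong) simp_all
  show "fps_agree (2 * m + 1) (euler_trunc m 4) (euler_fps 4)"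
    using euler_trunc_agree_euler_fps[of 4 m m] by (rule fps_agree_mono) simp_all
qed simp

theorem bilateral_sum_eq_psi: "bilateral_sum (\<lambda>j. fps_X ^ nat (j ^ 2 + j)) = 2 * (psi oo fps_X ^ 2)"
proof -
  define a where "a = (\<lambda>j. fps_X ^ nat (j ^ 2 + j) :: int fps)"
  define g where "g = euler_fps 4 * unit_inv (euler_fps 2)"
  have summable: "bilateral_summable a"
    unfolding a_def by (rule bilateral_summable_X_power, rule abs_le_square_plus)
  have E: "fps_agree D (\<Prod>i=1..m. 1 + fps_X ^ (2 * i)) g" if "D \<le> 2 * m + 1" for D m
    using fps_agree_mono[OF prod_one_plus_X_even_agree that] unfolding g_def .
  have "unit_inv (euler_fps 2) * bilateral_sum a = 2 * g ^ 2"
  proof (rule fps_eq_if_agree)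
    fix D
    have "fps_agree D
        (\<Sum>k\<le>2 * Suc (D + 1). qbinomial (fps_X ^ 2) (2 * Suc (D + 1)) k * a (int k - int (Suc (D + 1))))
        (unit_inv (euler_fps 2) * bilateral_sum a)"
      by (rule qbinomial_weighted_sum_agree[OF summable]) simp
    moreover have "fps_agree D
        ((\<Prod>i=1..Suc (D + 1). 1 + fps_X ^ (2 * i)) * (2 * (\<Prod>i=1..D + 1. 1 + fps_X ^ (2 * i))))
        (g * (2 * g))"
      by (rule fps_agree_mult, rule E, simp, rule fps_agree_mult[OF fps_agree_refl], rule E, simp)
    ultimately show "fps_agree D (unit_inv (euler_fps 2) * bilateral_sum a) (2 * g ^ 2)"
      unfolding a_def finite_jacobi_psi prod_one_plus_X_even_shift
      by (auto simp: fps_agree_def power2_eq_square mult_ac)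
  qed
  then have "bilateral_sum a = euler_fps 2 * (2 * g ^ 2)"
    by (simp add: unit_inv_mult_eq_iff)
  also have "\<dots> = 2 * euler_fps 4 ^ 2 * unit_inv (euler_fps 2) * (euler_fps 2 * unit_inv (euler_fps 2))"
    by (simp add: g_def power2_eq_square mult_ac)
  also have "\<dots> = 2 * (psi oo fps_X ^ 2)"
    by (simp add: unit_inv_right psi_compose_X_power)
  finally show ?thesis
    by (simp add: a_def)
qed

lemma phi_nth: "phi $ i = int (card {j :: int. j ^ 2 = int i})"
  unfolding phi_def
  by (rule bilateral_sum_X_power_nth) (auto intro: order.trans[OF _ abs_le_square])

lemma phi_nth_0: "phi $ 0 = 1"
proof -
  have "{j :: int. j ^ 2 = 0} = {0}"
    by auto
  then show ?thesis
    by (simp add: phi_nth)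
qed

lemma bilateral_sum_psi_nth:
  "bilateral_sum (\<lambda>j. fps_X ^ nat (j ^ 2 + j)) $ i = int (card {j :: int. j ^ 2 + j = int i})"
  by (rule bilateral_sum_X_power_nth) (simp_all add: abs_le_square_plus square_plus_nonneg)

lemma phi_nth_4_times: "phi $ (4 * t) = phi $ t"
proof -
  have "{j :: int. j ^ 2 = int (4 * t)} = (\<lambda>u. 2 * u) ` {u. u ^ 2 = int t}"
  proof (intro set_eqI iffI)
    fix j :: int assume "j \<in> {j. j ^ 2 = int (4 * t)}"
    then have j: "j ^ 2 = 4 * int t"
      by simp
    then have "even j"
      by (metis even_mult_iff even_numeral even_power)
    then obtain u where "j = 2 * u"
      by blast
    with j show "j \<in> (\<lambda>u. 2 * u) ` {u. u ^ 2 = int t}"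
      by (auto simp: power2_eq_square)
  qed (auto simp: power2_eq_square)
  then show ?thesis
    by (simp add: phi_nth card_image inj_on_def)
qed

lemma phi_nth_4_times_plus_1:
  "phi $ (4 * t + 1) = bilateral_sum (\<lambda>j. fps_X ^ nat (j ^ 2 + j)) $ t"
proof -
  have "{j :: int. j ^ 2 = int (4 * t + 1)} = (\<lambda>u. 2 * u + 1) ` {u. u ^ 2 + u = int t}"
  proof (intro set_eqI iffI)
    fix j :: int assume "j \<in> {j. j ^ 2 = int (4 * t + 1)}"
    then have j: "j ^ 2 = 4 * int t + 1"
      by simp
    then have "odd (j ^ 2)"
      by simp
    then obtain u where "j = 2 * u + 1"
      using oddE by fastforce
    with j show "j \<in> (\<lambda>u. 2 * u + 1) ` {u. u ^ 2 + u = int t}"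
      by (auto simp: power2_eq_square algebra_simps)
  qed (auto simp: power2_eq_square algebra_simps)
  then show ?thesis
    by (simp add: phi_nth bilateral_sum_psi_nth card_image inj_on_def)
qed

lemma phi_nth_4_times_plus_2_3:
  assumes "r = 2 \<or> r = 3"
  shows "phi $ (4 * t + r) = 0"
proof -
  have square_mod_4: "(j :: int) ^ 2 mod 4 \<in> {0, 1}" for j
  proof (cases "even j")
    case False
    then obtain u where "j = 2 * u + 1"
      using oddE by blast
    then have "j ^ 2 = 4 * (u ^ 2 + u) + 1"
      by (simp add: power2_eq_square algebra_simps)
    moreover have "(4 * (u ^ 2 + u) + 1) mod 4 = 1"
      by presburger
    ultimately show ?thesis
      by simp
  qed (auto simp: power2_eq_square elim!: evenE)
  then have "{j :: int. j ^ 2 = int (4 * t + r)} = {}"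
  proof (intro equals0I)
    fix j :: int assume "j \<in> {j. j ^ 2 = int (4 * t + r)}"
    then have "j ^ 2 mod 4 = int r"
      using assms by auto
    then show False
      using square_mod_4[of j] assms by auto
  qed
  then show ?thesis
    by (simp add: phi_nth)
qed

theorem phi_dissection: "phi = (phi oo fps_X ^ 4) + 2 * fps_X * (psi oo fps_X ^ 8)"
proof -
  define B where "B = bilateral_sum (\<lambda>j. fps_X ^ nat (j ^ 2 + j) :: int fps)"
  have "phi = (phi oo fps_X ^ 4) + fps_X * (B oo fps_X ^ 4)"
  proof (rule fps_ext)
    fix i :: nat
    obtain t r where i: "i = 4 * t + r" and "r < 4"
      by (metis mod_less_divisor mult_div_mod_eq zero_less_numeral)
    then consider "r = 0" | "r = 1" | "r = 2 \<or> r = 3"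
      by linarith
    then show "phi $ i = ((phi oo fps_X ^ 4) + fps_X * (B oo fps_X ^ 4)) $ i"
    proof cases
      case 1
      have "(fps_X * (B oo fps_X ^ 4)) $ (4 * t) = 0"
        by (cases t) (simp_all add: fps_X_mult_nth fps_nth_compose_X_power, presburger)
      then show ?thesis
        using 1 by (simp add: i phi_nth_4_times)
    next
      case 2
      have "\<not> 4 dvd 4 * t + 1"
        by presburger
      then have "((phi oo fps_X ^ 4) + fps_X * (B oo fps_X ^ 4)) $ (4 * t + 1) = B $ t"
        by (simp add: fps_X_mult_nth fps_nth_compose_X_power)
      then show ?thesis
        unfolding i 2 phi_nth_4_times_plus_1 B_def by (rule sym)
    next
      case 3
      then have "\<not> 4 dvd 4 * t + r" "\<not> 4 dvd 4 * t + r - 1"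
        by presburger+
      then show ?thesis
        using 3 by (auto simp: i phi_nth_4_times_plus_2_3 fps_X_mult_nth fps_nth_compose_X_power)
    qed
  qed
  also have "B oo fps_X ^ 4 = 2 * (psi oo fps_X ^ 8)"
    by (simp add: B_def bilateral_sum_eq_psi fps_compose_mult_distrib fps_compose_X_power_X_power)
  finally show ?thesis
    by (simp add: mult_ac)
qed

lemma fps_compose_X_power_even_uminus:
  fixes a :: "'a::comm_ring_1 fps"
  shows "a oo fps_X ^ (2 * k) oo - fps_X = a oo fps_X ^ (2 * k)"
proof (rule fps_ext)
  fix i
  have "even i" if "2 * k dvd i"
    using that dvd_mult_left by blast
  then show "(a oo fps_X ^ (2 * k) oo - fps_X) $ i = (a oo fps_X ^ (2 * k)) $ i"
    by (simp add: fps_compose_uminus' fps_nth_compose_X_power)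
qed

corollary phi_neg_dissection: "phi oo - fps_X = (phi oo fps_X ^ 4) - 2 * fps_X * (psi oo fps_X ^ 8)"
proof -
  have "phi oo - fps_X
      = (phi oo fps_X ^ (2 * 2) oo - fps_X) + 2 * (- fps_X) * (psi oo fps_X ^ (2 * 4) oo - fps_X)"
    by (subst phi_dissection) (simp add: fps_compose_add_distrib fps_compose_mult_distrib)
  then show ?thesis
    unfolding fps_compose_X_power_even_uminus by simp
qed

definition fps_in_X_power :: "nat \<Rightarrow> 'a::idom fps \<Rightarrow> bool" where
  "fps_in_X_power k a \<longleftrightarrow> (\<exists>b. a = b oo fps_X ^ k)"

lemma fps_in_X_power_nth: "fps_in_X_power k a \<Longrightarrow> \<not> k dvd i \<Longrightarrow> a $ i = 0"
  by (auto simp: fps_in_X_power_def fps_nth_compose_X_power)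

lemma fps_in_X_power_compose [intro]: "fps_in_X_power k (b oo fps_X ^ k)"
  by (auto simp: fps_in_X_power_def)

lemma fps_in_X_power_1 [intro]: "fps_in_X_power k 1"
  using fps_in_X_power_compose[of k 1] by simp

lemma fps_in_X_power_X_power [intro]:
  assumes "k > 0"
  shows "fps_in_X_power k (fps_X ^ k)"
proof -
  have "fps_X oo fps_X ^ k = (fps_X ^ k :: 'a fps)"
    using assms by (auto simp: fps_X_fps_compose fps_eq_iff)
  then show ?thesis
    by (metis fps_in_X_power_compose)
qed

lemma fps_in_X_power_mult [intro]:
  "k > 0 \<Longrightarrow> fps_in_X_power k a \<Longrightarrow> fps_in_X_power k b \<Longrightarrow> fps_in_X_power k (a * b)"
  by (auto simp: fps_in_X_power_def fps_compose_mult_distrib[symmetric])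

lemma fps_in_X_power_power [intro]: "k > 0 \<Longrightarrow> fps_in_X_power k a \<Longrightarrow> fps_in_X_power k (a ^ m)"
  by (induction m) auto

lemma fps_in_X_power_unit_inv [intro]:
  assumes "k > 0" "a $ 0 = 1" "fps_in_X_power k a"
  shows "fps_in_X_power k (unit_inv a)"
proof -
  obtain b where b: "a = b oo fps_X ^ k"
    using assms(3) by (auto simp: fps_in_X_power_def)
  then have "unit_inv a = unit_inv b oo fps_X ^ k"
    using assms(1,2) by (simp add: unit_inv_compose)
  then show ?thesis
    by auto
qed

lemma fps_in_X_power_compose_dvd [intro]:
  assumes "k > 0" "m > 0" "k dvd m"
  shows "fps_in_X_power k (b oo fps_X ^ m)"
proof -
  obtain l where l: "m = k * l"
    using assms(3) by blast
  then have "b oo fps_X ^ m = b oo fps_X ^ l oo fps_X ^ k"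
    using assms(1,2) by (simp add: fps_compose_X_power_X_power mult.commute)
  then show ?thesis
    by auto
qed

lemma fps_in_X_power_euler_fps [intro]:
  "k > 0 \<Longrightarrow> r > 0 \<Longrightarrow> fps_in_X_power k (euler_fps (k * r))"
  using fps_in_X_power_compose[of k "euler_fps r"] euler_fps_compose[of k r] by simp

lemma fps_in_X_power_2_if_even:
  fixes a :: "'a::{idom, ring_char_0} fps"
  assumes "a oo - fps_X = a"
  shows "fps_in_X_power 2 a"
proof -
  have "a $ i = 0" if "odd i" for i
    using arg_cong[OF assms, of "\<lambda>f. f $ i"] that by (simp add: fps_compose_uminus')
  then have "a = Abs_fps (\<lambda>i. a $ (2 * i)) oo fps_X ^ 2"
    by (auto simp: fps_eq_iff fps_nth_compose_X_power elim!: evenE)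
  then show ?thesis
    by (auto simp: fps_in_X_power_def)
qed

lemma fps_cong_nth_0_if_in_X_power:
  "fps_cong m a b \<Longrightarrow> fps_in_X_power k b \<Longrightarrow> \<not> k dvd i \<Longrightarrow> m dvd a $ i"
  using fps_cong_nth[of m a b i] fps_in_X_power_nth[of k b i] by simp

lemma fps_X_mult_nth_even:
  "fps_in_X_power 2 a \<Longrightarrow> (fps_X * a) $ (2 * m) = 0"
  by (cases m) (simp_all add: fps_X_mult_nth fps_in_X_power_nth)

lemma phi_neg_mult_eq:
  "S * (phi oo - fps_X) = S * (phi oo fps_X ^ 4) - 2 * (fps_X * (S * (psi oo fps_X ^ 8)))"
  unfolding phi_neg_dissection by (simp add: algebra_simps)

lemma phi_neg_mult_nth_even:
  assumes "fps_in_X_power 2 S"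
  shows "(S * (phi oo - fps_X)) $ (2 * m) = (S * (phi oo fps_X ^ 4)) $ (2 * m)"
proof -
  have "fps_in_X_power 2 (S * (psi oo fps_X ^ 8))"
    using assms by (intro fps_in_X_power_mult fps_in_X_power_compose_dvd) simp_all
  then have "(fps_X * (S * (psi oo fps_X ^ 8))) $ (2 * m) = 0"
    by (rule fps_X_mult_nth_even)
  then show ?thesis
    unfolding phi_neg_mult_eq by (simp add: numeral_fps_const)
qed

lemma phi_neg_mult_nth_odd:
  assumes "fps_in_X_power 2 S"
  shows "(S * (phi oo - fps_X)) $ (2 * m + 1) = - 2 * (S * (psi oo fps_X ^ 8)) $ (2 * m)"
proof -
  have "fps_in_X_power 2 (S * (phi oo fps_X ^ 4))"
    using assms by (intro fps_in_X_power_mult fps_in_X_power_compose_dvd) simp_all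
  then show ?thesis
    unfolding phi_neg_mult_eq by (simp add: numeral_fps_const fps_in_X_power_nth)
qed

lemma phi_neg_square_mult_eq:
  "S * (phi oo - fps_X) ^ 2 = S * (phi oo fps_X ^ 4) ^ 2 + 4 * (fps_X ^ 2 * (S * (psi oo fps_X ^ 8) ^ 2))
    - 4 * (fps_X * (S * (phi oo fps_X ^ 4) * (psi oo fps_X ^ 8)))"
  unfolding phi_neg_dissection by (simp add: power2_eq_square algebra_simps)

lemma phi_neg_square_mult_nth_even:
  assumes "fps_in_X_power 2 S"
  shows "(S * (phi oo - fps_X) ^ 2) $ (2 * m + 2)
    = (S * (phi oo fps_X ^ 4) ^ 2) $ (2 * m + 2) + 4 * (S * (psi oo fps_X ^ 8) ^ 2) $ (2 * m)"
proof -
  have "fps_in_X_power 2 (S * (phi oo fps_X ^ 4) * (psi oo fps_X ^ 8))"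
    using assms by (intro fps_in_X_power_mult fps_in_X_power_compose_dvd) simp_all
  then have "(fps_X * (S * (phi oo fps_X ^ 4) * (psi oo fps_X ^ 8))) $ (2 * (m + 1)) = 0"
    by (rule fps_X_mult_nth_even)
  then show ?thesis
    unfolding phi_neg_square_mult_eq by (simp add: numeral_fps_const fps_X_power_mult_nth)
qed

lemma phi_neg_square_mult_nth_odd:
  assumes "fps_in_X_power 2 S"
  shows "(S * (phi oo - fps_X) ^ 2) $ (2 * m + 1)
    = - 4 * (S * (phi oo fps_X ^ 4) * (psi oo fps_X ^ 8)) $ (2 * m)"
proof -
  have "fps_in_X_power 2 (S * (phi oo fps_X ^ 4) ^ 2)"
    and "fps_in_X_power 2 (fps_X ^ 2 * (S * (psi oo fps_X ^ 8) ^ 2))"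
    using assms by (intro fps_in_X_power_mult fps_in_X_power_X_power fps_in_X_power_power
        fps_in_X_power_compose_dvd; simp)+
  then show ?thesis
    unfolding phi_neg_square_mult_eq by (simp add: numeral_fps_const fps_in_X_power_nth)
qed

lemma phi_neg_cong_1: "fps_cong 2 (phi oo - fps_X) 1"
proof -
  have "fps_cong 2 (euler_fps 1 ^ 2) (euler_fps (2 * 1))"
    by (rule euler_fps_square_cong) simp
  then have "fps_cong 2 (euler_fps 2 * (phi oo - fps_X)) (euler_fps 2 * 1)"
    unfolding euler_square_eq_phi by simp
  then have "fps_cong 2 (unit_inv (euler_fps 2) * (euler_fps 2 * (phi oo - fps_X)))
      (unit_inv (euler_fps 2) * (euler_fps 2 * 1))"
    by (rule fps_cong_mult_left)
  then show ?thesis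
    by (simp add: mult.assoc[symmetric] unit_inv_left)
qed

lemma phi_cong_1: "fps_cong 2 phi 1"
  using fps_cong_compose[OF phi_neg_cong_1, of "- fps_X"] by simp

lemma unit_inv_phi_neg_cong: "fps_cong 8 (unit_inv (phi oo - fps_X)) ((phi oo - fps_X) ^ 3)"
proof -
  define \<theta> where "\<theta> = phi oo - fps_X"
  have "fps_cong (2 * 2) (\<theta> ^ 2) (1 ^ 2)"
    unfolding \<theta>_def by (rule fps_cong_square[OF phi_neg_cong_1]) simp
  then have "fps_cong (2 * 4) ((\<theta> ^ 2) ^ 2) ((1 ^ 2) ^ 2)"
    by (intro fps_cong_square) simp_all
  then have "fps_cong 8 (\<theta> ^ 4) 1"
    by (simp flip: power_mult)
  then have "fps_cong 8 (unit_inv \<theta> * \<theta> ^ 4) (unit_inv \<theta> * 1)"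
    by (rule fps_cong_mult_left)
  moreover have "unit_inv \<theta> * \<theta> ^ 4 = (unit_inv \<theta> * \<theta>) * \<theta> ^ 3"
    by (simp add: power3_eq_cube power4_eq_xxxx mult.assoc)
  moreover have "unit_inv \<theta> * \<theta> = 1"
    by (simp add: \<theta>_def unit_inv_left phi_nth_0)
  ultimately show ?thesis
    unfolding \<theta>_def[symmetric] by (simp add: fps_cong_sym)
qed

lemma unit_inv_euler_fps_power_4_cong:
  "fps_cong 8 (unit_inv (euler_fps 1) ^ 4) ((phi oo - fps_X) ^ 2 * unit_inv (euler_fps 2) ^ 2)"
proof -
  define U1 U2 where "U1 = unit_inv (euler_fps 1)" and "U2 = unit_inv (euler_fps 2)"
  have "fps_cong (2 ^ Suc 2) (euler_fps 1 ^ 2 ^ Suc 2) (euler_fps (2 * 1) ^ 2 ^ 2)"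
    by (rule euler_fps_power_two_cong) simp
  then have "fps_cong 8 (U1 ^ 8) (U2 ^ 4)"
    unfolding U1_def U2_def by (intro fps_cong_unit_inv_power) simp_all
  then have cong: "fps_cong 8 (U1 ^ 8 * euler_fps 1 ^ 4) (U2 ^ 4 * euler_fps 1 ^ 4)"
    by (rule fps_cong_mult) simp
  have unit1: "U1 ^ 4 * euler_fps 1 ^ 4 = 1" and unit2: "U2 ^ 2 * euler_fps 2 ^ 2 = 1"
    unfolding U1_def U2_def by (simp_all add: unit_inv_power_mult_power)
  have "U1 ^ 8 * euler_fps 1 ^ 4 = U1 ^ 4 * (U1 ^ 4 * euler_fps 1 ^ 4)"
    by (simp add: mult.assoc flip: power_add)
  then have left: "U1 ^ 8 * euler_fps 1 ^ 4 = U1 ^ 4"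
    by (simp only: unit1 mult_1_right)
  have "euler_fps 1 ^ 4 = euler_fps 2 ^ 2 * (phi oo - fps_X) ^ 2"
    using arg_cong[OF euler_square_eq_phi, of "\<lambda>a. a ^ 2"] by (simp flip: power_mult add: power_mult_distrib)
  then have "U2 ^ 4 * euler_fps 1 ^ 4 = (U2 ^ 2 * euler_fps 2 ^ 2) * ((phi oo - fps_X) ^ 2 * U2 ^ 2)"
    by (simp add: mult_ac flip: power_add)
  then have right: "U2 ^ 4 * euler_fps 1 ^ 4 = (phi oo - fps_X) ^ 2 * U2 ^ 2"
    by (simp only: unit2 mult_1_left)
  from cong show ?thesis
    unfolding left right unfolding U1_def U2_def .
qed

theorem d7_cong:
  "fps_cong 8 (euler_fps 2 ^ 7 * unit_inv (euler_fps 1) ^ 22) (unit_inv (euler_fps 2) ^ 4 * (phi oo - fps_X))"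
proof -
  define U1 U2 where "U1 = unit_inv (euler_fps 1)" and "U2 = unit_inv (euler_fps 2)"
  have "fps_cong (2 ^ Suc 2) (euler_fps 1 ^ 2 ^ Suc 2) (euler_fps (2 * 1) ^ 2 ^ 2)"
    by (rule euler_fps_power_two_cong) simp
  then have "fps_cong 8 (U1 ^ 8) (U2 ^ 4)"
    unfolding U1_def U2_def by (intro fps_cong_unit_inv_power) simp_all
  then have "fps_cong 8 ((U1 ^ 8) ^ 3) ((U2 ^ 4) ^ 3)"
    by (rule fps_cong_power)
  then have cong: "fps_cong 8 (euler_fps 2 ^ 7 * U1 ^ 24 * euler_fps 1 ^ 2) (euler_fps 2 ^ 7 * U2 ^ 12 * euler_fps 1 ^ 2)"
    by (intro fps_cong_mult) (simp_all flip: power_mult)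
  have unit1: "U1 ^ 2 * euler_fps 1 ^ 2 = 1" and unit2: "U2 ^ 8 * euler_fps 2 ^ 8 = 1"
    unfolding U1_def U2_def by (simp_all add: unit_inv_power_mult_power)
  have "euler_fps 2 ^ 7 * U1 ^ 24 * euler_fps 1 ^ 2 = euler_fps 2 ^ 7 * U1 ^ 22 * (U1 ^ 2 * euler_fps 1 ^ 2)"
    by (simp add: mult_ac flip: power_add)
  then have left: "euler_fps 2 ^ 7 * U1 ^ 24 * euler_fps 1 ^ 2 = euler_fps 2 ^ 7 * U1 ^ 22"
    by (simp only: unit1 mult_1_right)
  have "euler_fps 2 ^ 7 * U2 ^ 12 * euler_fps 1 ^ 2 = euler_fps 2 ^ 7 * U2 ^ 12 * (euler_fps 2 * (phi oo - fps_X))"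
    by (simp only: euler_square_eq_phi)
  also have "\<dots> = (U2 ^ 8 * euler_fps 2 ^ 8) * (U2 ^ 4 * (phi oo - fps_X))"
    by algebra
  also have "\<dots> = U2 ^ 4 * (phi oo - fps_X)"
    by (simp only: unit2 mult_1_left)
  finally have right: "euler_fps 2 ^ 7 * U2 ^ 12 * euler_fps 1 ^ 2 = U2 ^ 4 * (phi oo - fps_X)" .
  from cong show ?thesis
    unfolding left right unfolding U1_def U2_def .
qed

lemma d7_dvd_iff:
  fixes k :: int
  assumes "k dvd 8"
  shows "k dvd d 7 m \<longleftrightarrow> k dvd (unit_inv (euler_fps 2) ^ 4 * (phi oo - fps_X)) $ m"
proof -
  have "8 dvd d 7 m - (unit_inv (euler_fps 2) ^ 4 * (phi oo - fps_X)) $ m"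
    using fps_cong_nth[OF d7_cong, of m] by (simp add: d_eq_coeff)
  then have "k dvd d 7 m - (unit_inv (euler_fps 2) ^ 4 * (phi oo - fps_X)) $ m"
    using assms dvd_trans by blast
  then show ?thesis
    by (metis dvd_add_right_iff diff_add_cancel)
qed

lemma fps_in_X_power_unit_inv_euler_fps [intro]:
  "k > 0 \<Longrightarrow> r > 0 \<Longrightarrow> fps_in_X_power k (unit_inv (euler_fps (k * r)))"
  by (intro fps_in_X_power_unit_inv fps_in_X_power_euler_fps) simp_all

lemma unit_inv_euler_fps_2_power_4_cong_4:
  "fps_cong 4 (unit_inv (euler_fps 2) ^ 4) (unit_inv (euler_fps 4) ^ 2)"
proof -
  have "fps_cong (2 ^ Suc 1) (euler_fps 2 ^ 2 ^ Suc 1) (euler_fps (2 * 2) ^ 2 ^ 1)"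
    by (rule euler_fps_power_two_cong) simp
  then show ?thesis
    by (intro fps_cong_unit_inv_power) simp_all
qed

lemma unit_inv_euler_fps_2_power_4_cong_2:
  "fps_cong 2 (unit_inv (euler_fps 2) ^ 4) (unit_inv (euler_fps 8))"
proof -
  have "fps_cong (2 ^ Suc 1) (euler_fps 2 ^ 2 ^ Suc 1) (euler_fps (2 * 2) ^ 2 ^ 1)"
    by (rule euler_fps_power_two_cong) simp
  then have "fps_cong 4 (euler_fps 2 ^ 4) (euler_fps 4 ^ 2)"
    by simp
  then have "fps_cong 2 (euler_fps 2 ^ 4) (euler_fps 4 ^ 2)"
    by (rule fps_cong_dvd_modulus) simp
  moreover have "fps_cong 2 (euler_fps 4 ^ 2) (euler_fps 8)"
    using euler_fps_square_cong[of 4] by simp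
  ultimately have "fps_cong 2 (euler_fps 2 ^ 4) (euler_fps 8 ^ 1)"
    by (simp add: fps_cong_trans)
  then show ?thesis
    using fps_cong_unit_inv_power[of "euler_fps 2" "euler_fps 8" 2 4 1] by simp
qed

lemma fps_in_X_power_unit_inv_euler_fps_2_power_4: "fps_in_X_power 2 (unit_inv (euler_fps 2) ^ 4)"
  using fps_in_X_power_unit_inv_euler_fps[of 2 1] by (intro fps_in_X_power_power) simp_all

lemma d7_4n2: "4 dvd d 7 (4 * n + 2)"
proof -
  define V where "V = unit_inv (euler_fps 2) ^ 4"
  have "fps_in_X_power 2 V"
    unfolding V_def by (rule fps_in_X_power_unit_inv_euler_fps_2_power_4)
  then have "(V * (phi oo - fps_X)) $ (2 * (2 * n + 1)) = (V * (phi oo fps_X ^ 4)) $ (2 * (2 * n + 1))"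
    by (rule phi_neg_mult_nth_even)
  moreover have "fps_cong 4 (V * (phi oo fps_X ^ 4)) (unit_inv (euler_fps 4) ^ 2 * (phi oo fps_X ^ 4))"
    unfolding V_def by (intro fps_cong_mult unit_inv_euler_fps_2_power_4_cong_4 fps_cong_refl)
  moreover have "fps_in_X_power 4 (unit_inv (euler_fps 4) ^ 2 * (phi oo fps_X ^ 4))"
    using fps_in_X_power_unit_inv_euler_fps[of 4 1] by (intro fps_in_X_power_mult fps_in_X_power_power) auto
  moreover have "\<not> 4 dvd 2 * (2 * n + 1)"
    by presburger
  ultimately show ?thesis
    unfolding d7_dvd_iff[of 4, simplified] V_def[symmetric] by (auto dest: fps_cong_nth_0_if_in_X_power)
qed

lemma d7_odd_dvd_iff:
  fixes k :: int
  assumes "k dvd 4" "i = 2 * m + 1"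
  shows "2 * k dvd d 7 i \<longleftrightarrow> k dvd (unit_inv (euler_fps 2) ^ 4 * (psi oo fps_X ^ 8)) $ (2 * m)"
proof -
  have "2 * k dvd 8"
    using mult_dvd_mono[OF dvd_refl assms(1), of 2] by simp
  then show ?thesis
    unfolding assms(2) d7_dvd_iff[OF \<open>2 * k dvd 8\<close>]
      phi_neg_mult_nth_odd[OF fps_in_X_power_unit_inv_euler_fps_2_power_4]
    by (simp add: mult_dvd_mono)
qed

lemma d7_8n5: "4 dvd d 7 (8 * n + 5)"
proof -
  have "fps_cong 2 (unit_inv (euler_fps 2) ^ 4 * (psi oo fps_X ^ 8)) (unit_inv (euler_fps 8) * (psi oo fps_X ^ 8))"
    by (intro fps_cong_mult unit_inv_euler_fps_2_power_4_cong_2 fps_cong_refl)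
  moreover have "fps_in_X_power 8 (unit_inv (euler_fps 8) * (psi oo fps_X ^ 8))"
    using fps_in_X_power_unit_inv_euler_fps[of 8 1] by (intro fps_in_X_power_mult) auto
  moreover have "\<not> 8 dvd 2 * (4 * n + 2)"
    by presburger
  ultimately have "2 dvd (unit_inv (euler_fps 2) ^ 4 * (psi oo fps_X ^ 8)) $ (2 * (4 * n + 2))"
    by (rule fps_cong_nth_0_if_in_X_power)
  then show ?thesis
    using d7_odd_dvd_iff[of 2 "8 * n + 5" "4 * n + 2"] by simp
qed

lemma d7_16n9: "4 dvd d 7 (16 * n + 9)"
proof -
  have "fps_cong 2 (unit_inv (euler_fps 2) ^ 4 * (psi oo fps_X ^ 8)) (unit_inv (euler_fps 8) * (psi oo fps_X ^ 8))"
    by (intro fps_cong_mult unit_inv_euler_fps_2_power_4_cong_2 fps_cong_refl)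
  also have "unit_inv (euler_fps 8) * (psi oo fps_X ^ 8) = euler_fps 16 ^ 2 * unit_inv (euler_fps 8) ^ 2"
    by (simp add: psi_compose_X_power power2_eq_square mult_ac)
  finally have "fps_cong 2 (unit_inv (euler_fps 2) ^ 4 * (psi oo fps_X ^ 8)) (euler_fps 32 * unit_inv (euler_fps 16))"
  proof (rule fps_cong_trans)
    show "fps_cong 2 (euler_fps 16 ^ 2 * unit_inv (euler_fps 8) ^ 2) (euler_fps 32 * unit_inv (euler_fps 16))"
    proof (rule fps_cong_mult)
      show "fps_cong 2 (euler_fps 16 ^ 2) (euler_fps 32)"
        using euler_fps_square_cong[of 16] by simp
      show "fps_cong 2 (unit_inv (euler_fps 8) ^ 2) (unit_inv (euler_fps 16))"
        using euler_fps_square_cong[of 8] fps_cong_unit_inv_power[of "euler_fps 8" "euler_fps 16" 2 2 1] by simp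
    qed
  qed
  moreover have "fps_in_X_power 16 (euler_fps 32 * unit_inv (euler_fps 16))"
    using fps_in_X_power_unit_inv_euler_fps[of 16 1] fps_in_X_power_euler_fps[of 16 2]
    by (intro fps_in_X_power_mult) auto
  moreover have "\<not> 16 dvd 2 * (8 * n + 4)"
    by presburger
  ultimately have "2 dvd (unit_inv (euler_fps 2) ^ 4 * (psi oo fps_X ^ 8)) $ (2 * (8 * n + 4))"
    by (rule fps_cong_nth_0_if_in_X_power)
  then show ?thesis
    using d7_odd_dvd_iff[of 2 "16 * n + 9" "8 * n + 4"] by simp
qed

lemma d7_4n3: "8 dvd d 7 (4 * n + 3)"
proof -
  have "fps_cong 4 (unit_inv (euler_fps 2) ^ 4 * (psi oo fps_X ^ 8)) (unit_inv (euler_fps 4) ^ 2 * (psi oo fps_X ^ 8))"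
    by (intro fps_cong_mult unit_inv_euler_fps_2_power_4_cong_4 fps_cong_refl)
  moreover have "fps_in_X_power 4 (unit_inv (euler_fps 4) ^ 2 * (psi oo fps_X ^ 8))"
    using fps_in_X_power_unit_inv_euler_fps[of 4 1] by (intro fps_in_X_power_mult fps_in_X_power_power) auto
  moreover have "\<not> 4 dvd 2 * (2 * n + 1)"
    by presburger
  ultimately have "4 dvd (unit_inv (euler_fps 2) ^ 4 * (psi oo fps_X ^ 8)) $ (2 * (2 * n + 1))"
    by (rule fps_cong_nth_0_if_in_X_power)
  then show ?thesis
    using d7_odd_dvd_iff[of 4 "4 * n + 3" "2 * n + 1"] by simp
qed

lemma fps_in_X_power_2_mult_compose_uminus: "fps_in_X_power 2 (a * (a oo - fps_X :: int fps))"
  by (rule fps_in_X_power_2_if_even) (simp add: fps_compose_mult_distrib mult.commute)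

lemma d7_8n4_reduction:
  "8 dvd d 7 (8 * n + 4) \<longleftrightarrow>
    8 dvd (phi * unit_inv (euler_fps 1) ^ 2 * (phi oo fps_X ^ 2) ^ 2) $ (2 * n + 1)
    + 4 * ((phi oo fps_X ^ 2) * unit_inv (euler_fps 2) ^ 2 * (psi oo fps_X ^ 8) ^ 2) $ (2 * (2 * n))"
proof -
  define U1 U2 where "U1 = unit_inv (euler_fps 1)" and "U2 = unit_inv (euler_fps 2)"
  define R where "R = (phi oo fps_X ^ 2) * U2 ^ 2"
  define m where "m = 2 * n + 1"
  have U1_compose: "U1 oo fps_X ^ 2 = U2"
    by (simp add: U1_def U2_def unit_inv_compose euler_fps_compose)
  have phi_compose: "phi oo fps_X ^ 2 oo fps_X ^ 2 = phi oo fps_X ^ 4"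
    by (simp add: fps_compose_X_power_X_power)
  have U1_power_compose: "U1 ^ k oo fps_X ^ 2 = U2 ^ k" for k
    by (subst fps_compose_power[symmetric]) (simp_all add: U1_compose)
  have R_sparse: "fps_in_X_power 2 R"
    unfolding R_def U2_def using fps_in_X_power_unit_inv_euler_fps[of 2 1]
    by (intro fps_in_X_power_mult fps_in_X_power_power) auto
  have "(U2 ^ 4 * (phi oo - fps_X)) $ (2 * (2 * m)) = (U2 ^ 4 * (phi oo fps_X ^ 4)) $ (2 * (2 * m))"
    unfolding U2_def by (rule phi_neg_mult_nth_even[OF fps_in_X_power_unit_inv_euler_fps_2_power_4])
  also have "U2 ^ 4 * (phi oo fps_X ^ 4) = U1 ^ 4 * (phi oo fps_X ^ 2) oo fps_X ^ 2"
    by (simp add: fps_compose_mult_distrib U1_power_compose phi_compose)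
  also have "(U1 ^ 4 * (phi oo fps_X ^ 2) oo fps_X ^ 2) $ (2 * (2 * m)) = (U1 ^ 4 * (phi oo fps_X ^ 2)) $ (2 * m)"
    by (rule fps_compose_X_power_nth_mult) simp
  finally have halve: "(U2 ^ 4 * (phi oo - fps_X)) $ (2 * (2 * m)) = (U1 ^ 4 * (phi oo fps_X ^ 2)) $ (2 * m)" .
  have "fps_cong 8 (U1 ^ 4 * (phi oo fps_X ^ 2)) (R * (phi oo - fps_X) ^ 2)"
    using fps_cong_mult[OF unit_inv_euler_fps_power_4_cong fps_cong_refl[of 8 "phi oo fps_X ^ 2"]]
    by (simp add: R_def U1_def U2_def mult_ac)
  then have mod_8: "8 dvd (U1 ^ 4 * (phi oo fps_X ^ 2)) $ (2 * m) - (R * (phi oo - fps_X) ^ 2) $ (2 * (2 * n) + 2)"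
    using fps_cong_nth by (simp add: m_def algebra_simps)
  have "R * (phi oo fps_X ^ 4) ^ 2 = phi * U1 ^ 2 * (phi oo fps_X ^ 2) ^ 2 oo fps_X ^ 2"
    by (simp add: R_def fps_compose_mult_distrib fps_compose_power[symmetric] U1_power_compose
        phi_compose mult_ac)
  then have halve_again: "(R * (phi oo fps_X ^ 4) ^ 2) $ (2 * (2 * n) + 2)
      = (phi * U1 ^ 2 * (phi oo fps_X ^ 2) ^ 2) $ (2 * n + 1)"
    using fps_compose_X_power_nth_mult[of 2 _ "2 * n + 1"] by (simp add: algebra_simps)
  have "8 dvd d 7 (2 * (2 * m)) \<longleftrightarrow> 8 dvd (U2 ^ 4 * (phi oo - fps_X)) $ (2 * (2 * m))"
    unfolding U2_def by (rule d7_dvd_iff) simp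
  moreover have "2 * (2 * m) = 8 * n + 4"
    by (simp add: m_def)
  ultimately show ?thesis
    using halve mod_8 halve_again phi_neg_square_mult_nth_even[OF R_sparse, of "2 * n"]
    unfolding R_def U1_def U2_def by (simp add: dvd_diff_commute) presburger
qed

lemma phi_compose_cong_1: "c $ 0 = 0 \<Longrightarrow> fps_cong 2 (phi oo c) 1"
  using fps_cong_compose[OF phi_cong_1] by simp

lemma psi_8_square_coeff_cong:
  "2 dvd ((phi oo fps_X ^ 2) * unit_inv (euler_fps 2) ^ 2 * (psi oo fps_X ^ 8) ^ 2) $ (2 * (2 * n))
    - (unit_inv (euler_fps 2) * (psi oo fps_X ^ 8)) $ (2 * n)"
proof -
  define U2 B where "U2 = unit_inv (euler_fps 2)" and "B = psi oo fps_X ^ 8"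
  have "fps_cong 2 ((phi oo fps_X ^ 2) * U2 ^ 2 * B ^ 2) (1 * unit_inv (euler_fps 4) * (B oo fps_X ^ 2))"
  proof (intro fps_cong_mult phi_compose_cong_1 fps_cong_2_square)
    show "fps_cong 2 (U2 ^ 2) (unit_inv (euler_fps 4))"
      using euler_fps_square_cong[of 2] fps_cong_unit_inv_power[of "euler_fps 2" "euler_fps 4" 2 2 1]
      by (simp add: U2_def)
  qed simp
  moreover have "1 * unit_inv (euler_fps 4) * (B oo fps_X ^ 2) = U2 * B oo fps_X ^ 2"
    by (simp add: U2_def fps_compose_mult_distrib unit_inv_compose euler_fps_compose)
  ultimately have "2 dvd ((phi oo fps_X ^ 2) * U2 ^ 2 * B ^ 2) $ (2 * (2 * n)) - (U2 * B oo fps_X ^ 2) $ (2 * (2 * n))"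
    using fps_cong_nth by metis
  moreover have "(U2 * B oo fps_X ^ 2) $ (2 * (2 * n)) = (U2 * B) $ (2 * n)"
    by (rule fps_compose_X_power_nth_mult) simp
  ultimately show ?thesis
    by (simp add: U2_def B_def)
qed

lemma d7_8n4_reduced:
  "8 dvd (phi * unit_inv (euler_fps 1) ^ 2 * (phi oo fps_X ^ 2) ^ 2) $ (2 * n + 1)
    + 4 * ((phi oo fps_X ^ 2) * unit_inv (euler_fps 2) ^ 2 * (psi oo fps_X ^ 8) ^ 2) $ (2 * (2 * n))"
proof -
  define U1 U2 where "U1 = unit_inv (euler_fps 1)" and "U2 = unit_inv (euler_fps 2)"
  define \<theta> A B where "\<theta> = phi oo - fps_X" and "A = phi oo fps_X ^ 4" and "B = psi oo fps_X ^ 8"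
  define E where "E = (phi * \<theta>) * ((phi oo fps_X ^ 2) ^ 2 * U2)"
  have "unit_inv (euler_fps 1 ^ 2) = U2 * unit_inv \<theta>"
    unfolding euler_square_eq_phi U2_def \<theta>_def[symmetric] by (simp add: unit_inv_mult \<theta>_def phi_nth_0)
  then have "phi * U1 ^ 2 * (phi oo fps_X ^ 2) ^ 2 = phi * (phi oo fps_X ^ 2) ^ 2 * U2 * unit_inv \<theta>"
    by (simp add: U1_def unit_inv_power mult_ac)
  moreover have "fps_cong 8 (phi * (phi oo fps_X ^ 2) ^ 2 * U2 * unit_inv \<theta>)
      (phi * (phi oo fps_X ^ 2) ^ 2 * U2 * \<theta> ^ 3)"
    unfolding \<theta>_def by (rule fps_cong_mult_left[OF unit_inv_phi_neg_cong])
  moreover have "phi * (phi oo fps_X ^ 2) ^ 2 * U2 * \<theta> ^ 3 = E * \<theta> ^ 2"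
    by (simp add: E_def power3_eq_cube power2_eq_square mult_ac)
  ultimately have inverse_phi_neg: "8 dvd (phi * U1 ^ 2 * (phi oo fps_X ^ 2) ^ 2) $ (2 * n + 1) - (E * \<theta> ^ 2) $ (2 * n + 1)"
    using fps_cong_nth by metis
  have "fps_in_X_power 2 E"
    unfolding E_def \<theta>_def U2_def using fps_in_X_power_unit_inv_euler_fps[of 2 1]
    by (intro fps_in_X_power_mult fps_in_X_power_power fps_in_X_power_2_mult_compose_uminus) auto
  then have odd_part: "(E * \<theta> ^ 2) $ (2 * n + 1) = - 4 * (E * A * B) $ (2 * n)"
    unfolding \<theta>_def A_def B_def by (rule phi_neg_square_mult_nth_odd)
  have "fps_cong 2 (E * A * B) ((1 * 1) * (1 ^ 2 * U2) * 1 * B)"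
    unfolding E_def A_def \<theta>_def
    by (intro fps_cong_mult fps_cong_power phi_cong_1 phi_compose_cong_1 fps_cong_refl) simp_all
  then have mod_2: "2 dvd (E * A * B) $ (2 * n) - (U2 * B) $ (2 * n)"
    using fps_cong_nth by fastforce
  show ?thesis
    using inverse_phi_neg odd_part mod_2 psi_8_square_coeff_cong[of n]
    unfolding U1_def[symmetric] U2_def[symmetric] B_def[symmetric] by presburger
qed

lemma d7_8n4: "8 dvd d 7 (8 * n + 4)"
  using d7_8n4_reduction d7_8n4_reduced by blast

theorem theorem3p4:
  fixes n :: nat
  shows "d 7 (4 * n + 2) mod 4 = 0 \<and> d 7 (8 * n + 5) mod 4 = 0 \<and> d 7 (16 * n + 9) mod 4 = 0
         \<and> d 7 (4 * n + 3) mod 8 = 0 \<and> d 7 (8 * n + 4) mod 8 = 0"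
  using d7_4n2 d7_8n5 d7_16n9 d7_4n3 d7_8n4 by (simp add: dvd_eq_mod_eq_0)

end
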